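(* There exist absolute constants $c>0$ and $C>0$ such that the following holds. Let $n\ge2$ be an integer and $L,B,\varepsilon>0$ with $\varepsilon\le LB^2/4$. Then for every PIFO algorithm $\mathcal{A}$ there exist a dimension $d\le C\big(1+Bn^{-1/4}\sqrt{L/\varepsilon}\big)$ and functions $f_1,\dots,f_n:\mathbb{R}^d\to\mathbb{R}$ such that $\{f_i\}_{i=1}^n$ is $L$-average smooth, $f=\frac1n\sum_i f_i$ is convex and has a minimizer $x^*$ with $\|x_0-x^*\|_2\le B$ ($x_0$ the initial point of $\mathcal{A}$), and the iterates of $\mathcal{A}$ satisfy $\mathbb{E} f(x_t)-f(x^* )\ge\varepsilon$ for all integers $0\le t\le c\big(n+Bn^{3/4}\sqrt{L/\varepsilon}\big)$. That is, $\mathcal{A}$ needs $\Omega(n+Bn^{3/4}\sqrt{L/\varepsilon})$ oracle queries.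
   Context: Differentiable $f_1,\dots,f_n:\mathbb{R}^d\to\mathbb{R}$ are $L$-average smooth if $\frac1n\sum_{i=1}^n\|\nabla f_i(x)-\nabla f_i(y)\|_2^2\le L^2\|x-y\|_2^2$ for all $x,y$. For $\gamma>0$, $\mathrm{prox}^{\gamma}_g(x)=\arg\min_u\{g(u)+\frac{1}{2\gamma}\|x-u\|_2^2\}$. PIFO algorithm: given $f_1,\dots,f_n:\mathbb{R}^d\to\mathbb{R}$ and $f=\frac1n\sum_i f_i$, a PIFO algorithm $\mathcal{A}$ is specified by a probability vector $(p_1,\dots,p_n)$ ($p_j\ge0$, $\sum_j p_j=1$), an initial point $x_0$ and parameters $\gamma_t>0$; it draws indices $i_1,i_2,\dots$ independently with $\mathbb{P}(i_t=j)=p_j$, at step $t\ge1$ queries the oracle $h_f(x_{t-1},i_t,\gamma_t)=[f_{i_t}(x_{t-1}),\nabla f_{i_t}(x_{t-1}),\mathrm{prox}^{\gamma_t}_{f_{i_t}}(x_{t-1})]$, and outputs an iterate $x_t\in\mathrm{span}\{x_0,\dots,x_{t-1},\nabla f_{i_1}(x_0),\dots,\nabla f_{i_t}(x_{t-1}),\mathrm{prox}^{\gamma_1}_{f_{i_1}}(x_0),\dots,\mathrm{prox}^{\gamma_t}_{f_{i_t}}(x_{t-1})\}$ (the choice within the span may depend on all previously observed information). Iterate $x_t$ uses $t$ oracle queries. *)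

theory Defs
  imports Complex_Main "HOL-Library.FuncSet"
begin

text \<open>Vectors of R^d are represented as functions nat => real vanishing at all
  coordinates i >= d. Coordinates are 0,...,d-1; component indices are 0,...,n-1.\<close>

type_synonym vec = "nat \<Rightarrow> real"

definition Rd :: "nat \<Rightarrow> vec set" where
  "Rd d = {x. \<forall>i\<ge>d. x i = 0}"

definition vinner :: "nat \<Rightarrow> vec \<Rightarrow> vec \<Rightarrow> real" where
  "vinner d x y = (\<Sum>i<d. x i * y i)"

definition vnorm :: "nat \<Rightarrow> vec \<Rightarrow> real" where
  "vnorm d x = sqrt (\<Sum>i<d. (x i)^2)"

definition vadd :: "vec \<Rightarrow> vec \<Rightarrow> vec" where
  "vadd x y = (\<lambda>i. x i + y i)"

definition vsub :: "vec \<Rightarrow> vec \<Rightarrow> vec" where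
  "vsub x y = (\<lambda>i. x i - y i)"

definition vscale :: "real \<Rightarrow> vec \<Rightarrow> vec" where
  "vscale a x = (\<lambda>i. a * x i)"

definition has_grad :: "nat \<Rightarrow> (vec \<Rightarrow> real) \<Rightarrow> vec \<Rightarrow> vec \<Rightarrow> bool" where
  "has_grad d f x g \<longleftrightarrow> g \<in> Rd d \<and>
     (\<forall>e>0. \<exists>\<delta>>0. \<forall>h\<in>Rd d. vnorm d h < \<delta> \<longrightarrow>
        \<bar>f (vadd x h) - f x - vinner d g h\<bar> \<le> e * vnorm d h)"

definition grad :: "nat \<Rightarrow> (vec \<Rightarrow> real) \<Rightarrow> vec \<Rightarrow> vec" where
  "grad d f x = (THE g. has_grad d f x g)"

definition is_prox :: "nat \<Rightarrow> real \<Rightarrow> (vec \<Rightarrow> real) \<Rightarrow> vec \<Rightarrow> vec \<Rightarrow> bool" where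
  "is_prox d \<gamma> f x u \<longleftrightarrow> u \<in> Rd d \<and>
     (\<forall>v\<in>Rd d. f u + (vnorm d (vsub x u))^2 / (2*\<gamma>) \<le> f v + (vnorm d (vsub x v))^2 / (2*\<gamma>))"

definition prox :: "nat \<Rightarrow> real \<Rightarrow> (vec \<Rightarrow> real) \<Rightarrow> vec \<Rightarrow> vec" where
  "prox d \<gamma> f x = (THE u. is_prox d \<gamma> f x u)"

definition in_span :: "vec set \<Rightarrow> vec \<Rightarrow> bool" where
  "in_span S x \<longleftrightarrow> (\<exists>F c. finite F \<and> F \<subseteq> S \<and> x = (\<lambda>k. \<Sum>v\<in>F. c v * v k))"

definition favg :: "nat \<Rightarrow> (nat \<Rightarrow> vec \<Rightarrow> real) \<Rightarrow> vec \<Rightarrow> real" where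
  "favg n fs x = (\<Sum>i<n. fs i x) / real n"

definition avg_smooth :: "nat \<Rightarrow> nat \<Rightarrow> real \<Rightarrow> (nat \<Rightarrow> vec \<Rightarrow> real) \<Rightarrow> bool" where
  "avg_smooth d n L fs \<longleftrightarrow> (\<forall>x\<in>Rd d. \<forall>y\<in>Rd d.
     (\<Sum>i<n. (vnorm d (vsub (grad d (fs i) x) (grad d (fs i) y)))^2) / real n
       \<le> L^2 * (vnorm d (vsub x y))^2)"

definition convex_Rd :: "nat \<Rightarrow> (vec \<Rightarrow> real) \<Rightarrow> bool" where
  "convex_Rd d f \<longleftrightarrow> (\<forall>x\<in>Rd d. \<forall>y\<in>Rd d. \<forall>\<theta>::real. 0 \<le> \<theta> \<and> \<theta> \<le> 1 \<longrightarrow>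
     f (vadd (vscale \<theta> x) (vscale (1-\<theta>) y)) \<le> \<theta> * f x + (1-\<theta>) * f y)"

text \<open>An observation of step t: (i_t, f_{i_t}(x_{t-1}), grad f_{i_t}(x_{t-1}), prox f_{i_t}(x_{t-1})).\<close>
type_synonym obs = "nat \<times> real \<times> vec \<times> vec"

text \<open>A PIFO algorithm: probability vector p (on indices 0..n-1), step parameters gamma t (t>=1),
  and, for every dimension d, an initial point x0 d and an update rule R d, which maps the
  history of observations (of length t >= 1) to the iterate x_t.\<close>
definition pifo_span_set :: "(nat \<Rightarrow> vec) \<Rightarrow> (nat \<Rightarrow> obs list \<Rightarrow> vec) \<Rightarrow> nat \<Rightarrow> obs list \<Rightarrow> vec set" where
  "pifo_span_set x0 R d h =
     {x0 d} \<union> {R d (take s h) | s. 1 \<le> s \<and> s < length h}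
     \<union> {fst (snd (snd (h ! s))) | s. s < length h}
     \<union> {snd (snd (snd (h ! s))) | s. s < length h}"

definition pifo_algorithm ::
  "nat \<Rightarrow> (nat \<Rightarrow> real) \<Rightarrow> (nat \<Rightarrow> real) \<Rightarrow> (nat \<Rightarrow> vec) \<Rightarrow> (nat \<Rightarrow> obs list \<Rightarrow> vec) \<Rightarrow> bool" where
  "pifo_algorithm n p \<gamma> x0 R \<longleftrightarrow>
     (\<forall>j. 0 \<le> p j) \<and> (\<Sum>j<n. p j) = 1 \<and> (\<forall>t\<ge>1. \<gamma> t > 0) \<and>
     (\<forall>d. x0 d \<in> Rd d) \<and>
     (\<forall>d h. h \<noteq> [] \<longrightarrow> in_span (pifo_span_set x0 R d h) (R d h))"

text \<open>History after t oracle calls, along the index sequence iota (i_s = iota s, s >= 1).\<close>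
primrec pifo_hist ::
  "(nat \<Rightarrow> real) \<Rightarrow> (nat \<Rightarrow> vec) \<Rightarrow> (nat \<Rightarrow> obs list \<Rightarrow> vec) \<Rightarrow> nat \<Rightarrow> (nat \<Rightarrow> vec \<Rightarrow> real)
   \<Rightarrow> (nat \<Rightarrow> nat) \<Rightarrow> nat \<Rightarrow> obs list" where
  "pifo_hist \<gamma> x0 R d fs \<iota> 0 = []"
| "pifo_hist \<gamma> x0 R d fs \<iota> (Suc t) =
     (let h = pifo_hist \<gamma> x0 R d fs \<iota> t;
          x = (if t = 0 then x0 d else R d h);
          i = \<iota> (Suc t)
      in h @ [(i, fs i x, grad d (fs i) x, prox d (\<gamma> (Suc t)) (fs i) x)])"

definition pifo_iter ::
  "(nat \<Rightarrow> real) \<Rightarrow> (nat \<Rightarrow> vec) \<Rightarrow> (nat \<Rightarrow> obs list \<Rightarrow> vec) \<Rightarrow> nat \<Rightarrow> (nat \<Rightarrow> vec \<Rightarrow> real)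
   \<Rightarrow> (nat \<Rightarrow> nat) \<Rightarrow> nat \<Rightarrow> vec" where
  "pifo_iter \<gamma> x0 R d fs \<iota> t = (if t = 0 then x0 d else R d (pifo_hist \<gamma> x0 R d fs \<iota> t))"

text \<open>Expectation of F(x_t) over i_1,...,i_t iid with P(i_s = j) = p j.\<close>
definition pifo_expect ::
  "nat \<Rightarrow> (nat \<Rightarrow> real) \<Rightarrow> (nat \<Rightarrow> real) \<Rightarrow> (nat \<Rightarrow> vec) \<Rightarrow> (nat \<Rightarrow> obs list \<Rightarrow> vec) \<Rightarrow> nat
   \<Rightarrow> (nat \<Rightarrow> vec \<Rightarrow> real) \<Rightarrow> (vec \<Rightarrow> real) \<Rightarrow> nat \<Rightarrow> real" where
  "pifo_expect n p \<gamma> x0 R d fs F t =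
     (\<Sum>\<iota>\<in>PiE {1..t} (\<lambda>_. {..<n}). (\<Prod>s\<in>{1..t}. p (\<iota> s)) * F (pifo_iter \<gamma> x0 R d fs \<iota> t))"

end

theory Submission
  imports Defs "HOL-Analysis.Convex"
begin

text \<open>
  Let w 1, ..., w (d-1) be an orthonormal basis of the orthogonal complement of x0. The chain
  objective mu/2 * sum over l < m of (<w (l+1) - w l, x> - [l = 0] s)^2 is split between two
  components i_A and i_B, one taking the even and one the odd links, each scaled by n; all other
  components vanish. Starting from x0, a gradient or proximal query to i_A or i_B can make at most
  one further coordinate <w j, x> nonzero, and queries to the other components none. So after t
  queries the iterate has nonzero coordinates only among the first k, where k counts the draws of
  i_A and i_B, and E k <= t (p i_A + p i_B) <= 3 t / n for the two least likely indices. While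
  k < m the residuals of the first k + 1 links telescope to -s, giving suboptimality at least
  mu s^2 / (2 m). Taking m of order B n^(-1/4) sqrt (L / eps) balances this against eps. When that
  quantity is below a constant, a single quadratic in dimension 2 whose target is carried by the
  least likely component already forces Omega(n) queries.
\<close>

definition lin_comb :: "'a set \<Rightarrow> ('a \<Rightarrow> real) \<Rightarrow> ('a \<Rightarrow> vec) \<Rightarrow> vec" where
  "lin_comb J c a = (\<lambda>k. \<Sum>l\<in>J. c l * a l k)"

definition orthogonal_family :: "nat \<Rightarrow> 'a set \<Rightarrow> ('a \<Rightarrow> vec) \<Rightarrow> bool" where
  "orthogonal_family d J a \<longleftrightarrow> (\<forall>l\<in>J. \<forall>l'\<in>J. l \<noteq> l' \<longrightarrow> vinner d (a l) (a l') = 0)"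

lemma vnorm_power2: "(vnorm d x)^2 = vinner d x x"
  by (simp add: vnorm_def vinner_def sum_nonneg power2_eq_square)

lemma vnorm_nonneg: "vnorm d x \<ge> 0"
  by (simp add: vnorm_def sum_nonneg)

lemma vinner_commute: "vinner d x y = vinner d y x"
  by (simp add: vinner_def mult.commute)

lemma vinner_zero_left [simp]: "vinner d (\<lambda>k. 0) x = 0"
  by (simp add: vinner_def)

lemma vinner_self_nonneg: "vinner d x x \<ge> 0"
  by (simp add: vinner_def sum_nonneg)

lemma vinner_add_right: "vinner d x (\<lambda>k. y k + z k) = vinner d x y + vinner d x z"
  by (simp add: vinner_def algebra_simps sum.distrib)

lemma vinner_diff_right: "vinner d x (\<lambda>k. y k - z k) = vinner d x y - vinner d x z"
  by (simp add: vinner_def algebra_simps sum_subtractf)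

lemma vinner_diff_left: "vinner d (\<lambda>k. y k - z k) x = vinner d y x - vinner d z x"
  by (simp add: vinner_def algebra_simps sum_subtractf)

lemma vinner_scale_right: "vinner d x (\<lambda>k. a * y k) = a * vinner d x y"
  by (simp add: vinner_def algebra_simps sum_distrib_left)

lemma vinner_scale_left: "vinner d (\<lambda>k. a * y k) x = a * vinner d y x"
  by (simp add: vinner_def algebra_simps sum_distrib_left)

lemma vinner_lin_comb_right: "vinner d x (lin_comb J c a) = (\<Sum>l\<in>J. c l * vinner d x (a l))"
  unfolding vinner_def lin_comb_def
  by (simp add: sum_distrib_left sum_distrib_right algebra_simps sum.swap[of _ J])

lemma vinner_lin_comb_left: "vinner d (lin_comb J c a) x = (\<Sum>l\<in>J. c l * vinner d (a l) x)"
  using vinner_lin_comb_right[of d x J c a] by (simp add: vinner_commute)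

lemma vinner_Cauchy_Schwarz: "(vinner d x y)^2 \<le> vinner d x x * vinner d y y"
  unfolding vinner_def using Cauchy_Schwarz_ineq_sum[of x y "{..<d}"]
  by (simp add: power2_eq_square)

lemma vnorm_scale: "t \<ge> 0 \<Longrightarrow> vnorm d (\<lambda>k. t * v k) = t * vnorm d v"
  by (simp add: vnorm_def power_mult_distrib real_sqrt_mult flip: sum_distrib_left)

lemma vinner_self_eq_0:
  assumes "x \<in> Rd d" "vinner d x x = 0"
  shows "x = (\<lambda>k. 0)"
proof
  fix k
  show "x k = 0"
  proof (cases "k < d")
    case True
    have "\<forall>i\<in>{..<d}. x i * x i = 0"
      using assms(2) by (subst sum_nonneg_eq_0_iff[symmetric]) (auto simp: vinner_def)
    with True show ?thesis by auto
  qed (use assms(1) in \<open>auto simp: Rd_def\<close>)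
qed

lemma lin_comb_Rd: "(\<And>l. l \<in> J \<Longrightarrow> a l \<in> Rd d) \<Longrightarrow> lin_comb J c a \<in> Rd d"
  by (auto simp: Rd_def lin_comb_def intro!: sum.neutral)

lemma vinner_lin_comb_orthogonal:
  assumes "orthogonal_family d J a" "finite J" "l \<in> J"
  shows "vinner d (a l) (lin_comb J c a) = c l * vinner d (a l) (a l)"
proof -
  have "vinner d (a l) (lin_comb J c a) = (\<Sum>l'\<in>{l}. c l' * vinner d (a l) (a l'))"
    unfolding vinner_lin_comb_right
    using assms by (intro sum.mono_neutral_right) (auto simp: orthogonal_family_def)
  then show ?thesis by simp
qed

lemma vinner_lin_comb_lin_comb_orthogonal:
  assumes "orthogonal_family d J a" "finite J"
  shows "vinner d (lin_comb J c a) (lin_comb J e a) = (\<Sum>l\<in>J. c l * e l * vinner d (a l) (a l))"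
  unfolding vinner_lin_comb_left
  using assms by (intro sum.cong) (auto simp: vinner_lin_comb_orthogonal)

section \<open>Gradients and proximal points of least-squares functions\<close>

lemma has_grad_unique:
  assumes g1: "has_grad d f x g1" and g2: "has_grad d f x g2"
  shows "g1 = g2"
proof (rule ccontr)
  assume ne: "g1 \<noteq> g2"
  define v where "v = (\<lambda>k. g1 k - g2 k)"
  have vR: "v \<in> Rd d" using g1 g2 by (auto simp: has_grad_def Rd_def v_def)
  have "vinner d v v \<noteq> 0"
  proof
    assume "vinner d v v = 0"
    then have "v = (\<lambda>k. 0)" by (rule vinner_self_eq_0[OF vR])
    with ne show False by (auto simp: v_def fun_eq_iff)
  qed
  then have Npos: "vnorm d v > 0"
    using vnorm_nonneg[of d v] vnorm_power2[of d v] by (metis less_eq_real_def power_zero_numeral)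
  define e where "e = vnorm d v / 4"
  have epos: "e > 0" using Npos by (simp add: e_def)
  obtain \<delta>1 where d1: "\<delta>1 > 0"
    "\<forall>h\<in>Rd d. vnorm d h < \<delta>1 \<longrightarrow> \<bar>f (vadd x h) - f x - vinner d g1 h\<bar> \<le> e * vnorm d h"
    using g1 epos unfolding has_grad_def by blast
  obtain \<delta>2 where d2: "\<delta>2 > 0"
    "\<forall>h\<in>Rd d. vnorm d h < \<delta>2 \<longrightarrow> \<bar>f (vadd x h) - f x - vinner d g2 h\<bar> \<le> e * vnorm d h"
    using g2 epos unfolding has_grad_def by blast
  define \<tau> where "\<tau> = min \<delta>1 \<delta>2 / (2 * vnorm d v)"
  have tpos: "\<tau> > 0" using d1 d2 Npos by (simp add: \<tau>_def)
  define h where "h = (\<lambda>k. \<tau> * v k)"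
  have hR: "h \<in> Rd d" using vR by (auto simp: Rd_def h_def)
  have hn: "vnorm d h = \<tau> * vnorm d v" unfolding h_def using tpos by (simp add: vnorm_scale)
  have "\<tau> * vnorm d v = min \<delta>1 \<delta>2 / 2" using Npos by (simp add: \<tau>_def)
  then have hs: "vnorm d h < \<delta>1" "vnorm d h < \<delta>2" using hn d1 d2 by auto
  have "\<bar>vinner d v h\<bar> \<le> \<bar>f (vadd x h) - f x - vinner d g2 h\<bar> + \<bar>f (vadd x h) - f x - vinner d g1 h\<bar>"
    unfolding v_def by (simp add: vinner_diff_left)
  also have "\<dots> \<le> 2 * e * vnorm d h" using d1(2) d2(2) hR hs by force
  finally have "\<bar>vinner d v h\<bar> \<le> 2 * e * vnorm d h" .
  moreover have "vinner d v h = \<tau> * (vnorm d v)^2"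
    unfolding h_def by (simp add: vinner_scale_right vnorm_power2)
  ultimately have "\<tau> * (vnorm d v)^2 \<le> 2 * e * (\<tau> * vnorm d v)" using hn tpos Npos by simp
  then have "vnorm d v \<le> 2 * e" using tpos Npos by (simp add: power2_eq_square)
  with Npos show False by (simp add: e_def)
qed

lemma grad_eqI: "has_grad d f x g \<Longrightarrow> grad d f x = g"
  unfolding grad_def by (blast intro: the_equality has_grad_unique)

lemma has_grad_quadratic_remainder:
  assumes g: "g \<in> Rd d" and K: "K \<ge> 0"
    and rem: "\<And>h. h \<in> Rd d \<Longrightarrow> \<bar>f (vadd x h) - f x - vinner d g h\<bar> \<le> K * (vnorm d h)^2"
  shows "has_grad d f x g"
  unfolding has_grad_def
proof (intro conjI g allI impI)
  fix e :: real assume e: "e > 0"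
  show "\<exists>\<delta>>0. \<forall>h\<in>Rd d. vnorm d h < \<delta> \<longrightarrow> \<bar>f (vadd x h) - f x - vinner d g h\<bar> \<le> e * vnorm d h"
  proof (intro exI[of _ "e / (K + 1)"] conjI ballI impI)
    show "e / (K + 1) > 0" using e K by simp
    fix h assume h: "h \<in> Rd d" "vnorm d h < e / (K + 1)"
    have "K * (vnorm d h)^2 \<le> (K + 1) * vnorm d h * vnorm d h"
      by (simp add: power2_eq_square algebra_simps)
    also have "\<dots> \<le> (K + 1) * (e / (K + 1)) * vnorm d h"
      using h(2) K vnorm_nonneg[of d h] by (intro mult_right_mono mult_left_mono) auto
    also have "\<dots> = e * vnorm d h" using K by simp
    finally show "\<bar>f (vadd x h) - f x - vinner d g h\<bar> \<le> e * vnorm d h"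
      using rem[OF h(1)] by linarith
  qed
qed

definition lsq :: "nat \<Rightarrow> real \<Rightarrow> nat set \<Rightarrow> (nat \<Rightarrow> vec) \<Rightarrow> (nat \<Rightarrow> real) \<Rightarrow> vec \<Rightarrow> real" where
  "lsq d c J a b x = c / 2 * (\<Sum>l\<in>J. (vinner d (a l) x - b l)^2)"

definition lsq_grad :: "nat \<Rightarrow> real \<Rightarrow> nat set \<Rightarrow> (nat \<Rightarrow> vec) \<Rightarrow> (nat \<Rightarrow> real) \<Rightarrow> vec \<Rightarrow> vec" where
  "lsq_grad d c J a b x = lin_comb J (\<lambda>l. c * (vinner d (a l) x - b l)) a"

text \<open>For orthogonal a l the proximal problem decouples along the directions a l.\<close>
definition lsq_prox ::
  "nat \<Rightarrow> real \<Rightarrow> nat set \<Rightarrow> (nat \<Rightarrow> vec) \<Rightarrow> (nat \<Rightarrow> real) \<Rightarrow> real \<Rightarrow> vec \<Rightarrow> vec" where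
  "lsq_prox d c J a b \<gamma> x = (\<lambda>k. x k - lin_comb J (\<lambda>l. c * \<gamma> * (vinner d (a l) x - b l)
      / (1 + c * \<gamma> * vinner d (a l) (a l))) a k)"

lemma has_grad_lsq:
  assumes "finite J" "\<And>l. l \<in> J \<Longrightarrow> a l \<in> Rd d" "c \<ge> 0"
  shows "has_grad d (lsq d c J a b) x (lsq_grad d c J a b x)"
proof (rule has_grad_quadratic_remainder)
  show "lsq_grad d c J a b x \<in> Rd d" unfolding lsq_grad_def using assms by (intro lin_comb_Rd) auto
  define A where "A = (\<Sum>l\<in>J. vinner d (a l) (a l))"
  show "c / 2 * A \<ge> 0" unfolding A_def using assms by (simp add: sum_nonneg vinner_self_nonneg)
  fix h
  have lin: "vinner d (a l) (vadd x h) = vinner d (a l) x + vinner d (a l) h" for l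
    by (simp add: vadd_def vinner_add_right)
  have rem: "lsq d c J a b (vadd x h) - lsq d c J a b x - vinner d (lsq_grad d c J a b x) h
      = c / 2 * (\<Sum>l\<in>J. (vinner d (a l) h)^2)"
    unfolding lsq_def lsq_grad_def lin vinner_lin_comb_left
    by (simp add: power2_eq_square algebra_simps sum.distrib sum_distrib_left sum_subtractf
        vinner_commute[of d h])
  have "c / 2 * (\<Sum>l\<in>J. (vinner d (a l) h)^2) \<le> c / 2 * (\<Sum>l\<in>J. vinner d (a l) (a l) * vinner d h h)"
    using assms(3) by (intro mult_left_mono sum_mono vinner_Cauchy_Schwarz) auto
  also have "\<dots> = c / 2 * A * (vnorm d h)^2" by (simp add: A_def vnorm_power2 sum_distrib_right)
  finally show "\<bar>lsq d c J a b (vadd x h) - lsq d c J a b x - vinner d (lsq_grad d c J a b x) h\<bar>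
      \<le> c / 2 * A * (vnorm d h)^2"
    unfolding rem using assms(3) by (simp add: sum_nonneg)
qed

lemma grad_lsq:
  assumes "finite J" "\<And>l. l \<in> J \<Longrightarrow> a l \<in> Rd d" "c \<ge> 0"
  shows "grad d (lsq d c J a b) x = lsq_grad d c J a b x"
  using has_grad_lsq[OF assms] by (rule grad_eqI)

lemma lsq_prox_objective_expansion:
  fixes b :: "nat \<Rightarrow> real" and x v :: vec
  assumes J: "finite J" and c: "c \<ge> 0" and g: "\<gamma> > 0" and o: "orthogonal_family d J a"
  defines "u \<equiv> lsq_prox d c J a b \<gamma> x"
  shows "lsq d c J a b v + (vnorm d (vsub x v))^2 / (2*\<gamma>)
       = lsq d c J a b u + (vnorm d (vsub x u))^2 / (2*\<gamma>)
         + c/2 * (\<Sum>l\<in>J. (vinner d (a l) (\<lambda>k. v k - u k))^2)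
         + vinner d (\<lambda>k. v k - u k) (\<lambda>k. v k - u k) / (2*\<gamma>)"
proof -
  define e where "e l = (vinner d (a l) x - b l) / (1 + c * \<gamma> * vinner d (a l) (a l))" for l
  define y where "y = lin_comb J (\<lambda>l. c * \<gamma> * e l) a"
  define \<delta> where "\<delta> = (\<lambda>k. v k - u k)"
  have u_eq: "u = (\<lambda>k. x k - y k)" unfolding u_def lsq_prox_def y_def e_def by simp
  have au: "vinner d (a l) u - b l = e l" if l: "l \<in> J" for l
  proof -
    have "1 + c * \<gamma> * vinner d (a l) (a l) > 0"
      using c g vinner_self_nonneg[of d "a l"] by (auto intro: add_pos_nonneg)
    moreover have "vinner d (a l) u = vinner d (a l) x - c * \<gamma> * e l * vinner d (a l) (a l)"
      unfolding u_eq vinner_diff_right y_def using vinner_lin_comb_orthogonal[OF o J l] by simp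
    ultimately show ?thesis unfolding e_def by (simp add: field_simps)
  qed
  have avb: "vinner d (a l) v - b l = e l + vinner d (a l) \<delta>" if "l \<in> J" for l
    using au[OF that] unfolding \<delta>_def vinner_diff_right by simp
  have dist_v: "(vnorm d (vsub x v))^2 = vinner d y y - 2 * vinner d y \<delta> + vinner d \<delta> \<delta>"
  proof -
    have "vsub x v = (\<lambda>k. y k - \<delta> k)" unfolding vsub_def \<delta>_def u_eq by auto
    then show ?thesis
      by (simp add: vnorm_power2 vinner_diff_left vinner_diff_right vinner_commute[of d \<delta> y])
  qed
  have dist_u: "(vnorm d (vsub x u))^2 = vinner d y y"
    unfolding vnorm_power2 by (simp add: vsub_def u_eq)
  have lsq_v: "lsq d c J a b v = c/2 * (\<Sum>l\<in>J. (e l + vinner d (a l) \<delta>)^2)"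
    unfolding lsq_def using avb by (intro arg_cong[where f="\<lambda>s. c/2 * s"] sum.cong) auto
  have lsq_u: "lsq d c J a b u = c/2 * (\<Sum>l\<in>J. (e l)^2)"
    unfolding lsq_def using au by (intro arg_cong[where f="\<lambda>s. c/2 * s"] sum.cong) auto
  have "lsq d c J a b v - lsq d c J a b u
      = c * (\<Sum>l\<in>J. e l * vinner d (a l) \<delta>) + c/2 * (\<Sum>l\<in>J. (vinner d (a l) \<delta>)^2)"
    unfolding lsq_v lsq_u
    by (simp add: power2_eq_square algebra_simps sum.distrib sum_distrib_left sum_subtractf)
  moreover have "vinner d y \<delta> / \<gamma> = c * (\<Sum>l\<in>J. e l * vinner d (a l) \<delta>)"
    unfolding y_def vinner_lin_comb_left using g
    by (simp add: sum_distrib_left sum_divide_distrib algebra_simps)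
  ultimately show ?thesis unfolding dist_v dist_u \<delta>_def[symmetric] using g by (simp add: field_simps)
qed

lemma is_prox_lsq_iff:
  assumes J: "finite J" and a: "\<And>l. l \<in> J \<Longrightarrow> a l \<in> Rd d" and c: "c \<ge> 0" and g: "\<gamma> > 0"
    and o: "orthogonal_family d J a" and x: "x \<in> Rd d"
  shows "is_prox d \<gamma> (lsq d c J a b) x u' \<longleftrightarrow> u' = lsq_prox d c J a b \<gamma> x"
proof -
  define u where "u = lsq_prox d c J a b \<gamma> x"
  have uR: "u \<in> Rd d" unfolding u_def lsq_prox_def using x lin_comb_Rd[of J a d] a
    by (auto simp: Rd_def)
  have ge: "lsq d c J a b u + (vnorm d (vsub x u))^2 / (2*\<gamma>)
      + vinner d (\<lambda>k. v k - u k) (\<lambda>k. v k - u k) / (2*\<gamma>)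
     \<le> lsq d c J a b v + (vnorm d (vsub x v))^2 / (2*\<gamma>)" for v
  proof -
    have "0 \<le> c/2 * (\<Sum>l\<in>J. (vinner d (a l) (\<lambda>k. v k - u k))^2)"
      using c by (intro mult_nonneg_nonneg sum_nonneg) auto
    then show ?thesis
      using lsq_prox_objective_expansion[where b=b and x=x and v=v, OF J c g o] unfolding u_def by linarith
  qed
  have "is_prox d \<gamma> (lsq d c J a b) x u"
    unfolding is_prox_def
  proof (intro conjI ballI uR)
    fix v
    have "0 \<le> vinner d (\<lambda>k. v k - u k) (\<lambda>k. v k - u k) / (2*\<gamma>)"
      using g vinner_self_nonneg by simp
    then show "lsq d c J a b u + (vnorm d (vsub x u))^2 / (2*\<gamma>)
        \<le> lsq d c J a b v + (vnorm d (vsub x v))^2 / (2*\<gamma>)"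
      using ge[of v] by linarith
  qed
  moreover have "u' = u" if "is_prox d \<gamma> (lsq d c J a b) x u'"
  proof -
    have u'R: "u' \<in> Rd d" and le: "lsq d c J a b u' + (vnorm d (vsub x u'))^2 / (2*\<gamma>)
        \<le> lsq d c J a b u + (vnorm d (vsub x u))^2 / (2*\<gamma>)"
      using that uR unfolding is_prox_def by auto
    have "vinner d (\<lambda>k. u' k - u k) (\<lambda>k. u' k - u k) / (2*\<gamma>) \<le> 0" using ge[of u'] le by linarith
    then have "vinner d (\<lambda>k. u' k - u k) (\<lambda>k. u' k - u k) = 0"
      using g vinner_self_nonneg[of d "\<lambda>k. u' k - u k"] by (simp add: divide_le_0_iff)
    moreover have "(\<lambda>k. u' k - u k) \<in> Rd d" using uR u'R by (auto simp: Rd_def)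
    ultimately have "(\<lambda>k. u' k - u k) = (\<lambda>k. 0)" using vinner_self_eq_0 by blast
    then show "u' = u" by (auto simp: fun_eq_iff)
  qed
  ultimately show ?thesis unfolding u_def by blast
qed

lemma prox_lsq:
  assumes "finite J" "\<And>l. l \<in> J \<Longrightarrow> a l \<in> Rd d" "c \<ge> 0" "\<gamma> > 0"
    "orthogonal_family d J a" "x \<in> Rd d"
  shows "prox d \<gamma> (lsq d c J a b) x = lsq_prox d c J a b \<gamma> x"
  unfolding prox_def by (rule the_equality) (simp_all add: is_prox_lsq_iff[OF assms])

lemma lsq_convex:
  assumes "c \<ge> 0"
  shows "convex_Rd d (lsq d c J a b)"
  unfolding convex_Rd_def
proof (intro ballI allI impI)
  fix x y :: vec and \<theta> :: real assume \<theta>: "0 \<le> \<theta> \<and> \<theta> \<le> 1"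
  define r where "r z l = vinner d (a l) z - b l" for z l
  have lin: "r (vadd (vscale \<theta> x) (vscale (1-\<theta>) y)) l = \<theta> * r x l + (1-\<theta>) * r y l" for l
    unfolding r_def vadd_def vscale_def vinner_add_right vinner_scale_right
    by (simp add: algebra_simps)
  have sq: "(\<theta> * u + (1-\<theta>) * v)^2 \<le> \<theta> * u^2 + (1-\<theta>) * v^2" for u v :: real
  proof -
    have "\<theta> * u^2 + (1-\<theta>) * v^2 - (\<theta> * u + (1-\<theta>) * v)^2 = \<theta> * (1-\<theta>) * (u - v)^2"
      by (simp add: power2_eq_square algebra_simps)
    then show ?thesis using \<theta> by (metis diff_ge_0_iff_ge mult_nonneg_nonneg zero_le_power2 le_diff_eq)
  qed
  have "(\<Sum>l\<in>J. (r (vadd (vscale \<theta> x) (vscale (1-\<theta>) y)) l)^2)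
     \<le> \<theta> * (\<Sum>l\<in>J. (r x l)^2) + (1-\<theta>) * (\<Sum>l\<in>J. (r y l)^2)"
    unfolding lin sum_distrib_left sum.distrib[symmetric] by (intro sum_mono sq)
  then have "c/2 * (\<Sum>l\<in>J. (r (vadd (vscale \<theta> x) (vscale (1-\<theta>) y)) l)^2)
     \<le> c/2 * (\<theta> * (\<Sum>l\<in>J. (r x l)^2) + (1-\<theta>) * (\<Sum>l\<in>J. (r y l)^2))"
    using assms by (intro mult_left_mono) auto
  then show "lsq d c J a b (vadd (vscale \<theta> x) (vscale (1-\<theta>) y))
      \<le> \<theta> * lsq d c J a b x + (1-\<theta>) * lsq d c J a b y"
    unfolding lsq_def r_def[symmetric] by (simp add: field_simps)
qed

lemma favg_convex:
  assumes "\<And>i. i < n \<Longrightarrow> convex_Rd d (fs i)"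
  shows "convex_Rd d (favg n fs)"
  unfolding convex_Rd_def
proof (intro ballI allI impI)
  fix x y :: vec and \<theta> :: real assume xy: "x \<in> Rd d" "y \<in> Rd d" and \<theta>: "0 \<le> \<theta> \<and> \<theta> \<le> 1"
  have "(\<Sum>i<n. fs i (vadd (vscale \<theta> x) (vscale (1-\<theta>) y))) \<le> (\<Sum>i<n. \<theta> * fs i x + (1-\<theta>) * fs i y)"
    using assms xy \<theta> by (intro sum_mono) (auto simp: convex_Rd_def)
  also have "\<dots> = \<theta> * (\<Sum>i<n. fs i x) + (1-\<theta>) * (\<Sum>i<n. fs i y)"
    by (simp add: sum.distrib sum_distrib_left)
  finally show "favg n fs (vadd (vscale \<theta> x) (vscale (1-\<theta>) y)) \<le> \<theta> * favg n fs x + (1-\<theta>) * favg n fs y"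
    unfolding favg_def by (simp add: divide_right_mono add_divide_distrib[symmetric])
qed

section \<open>An orthonormal basis of the complement of x0\<close>

definition unit_vec :: "nat \<Rightarrow> vec" where
  "unit_vec j = (\<lambda>k. if k = j then 1 else 0)"

definition householder_dir :: "nat \<Rightarrow> vec \<Rightarrow> vec" where
  "householder_dir d x0 = (\<lambda>k. x0 k - vnorm d x0 * unit_vec 0 k)"

definition householder :: "nat \<Rightarrow> vec \<Rightarrow> vec \<Rightarrow> vec" where
  "householder d x0 z = (let v = householder_dir d x0 in
     if vinner d v v = 0 then z else (\<lambda>k. z k - 2 * vinner d v z / vinner d v v * v k))"

text \<open>The reflection exchanging the first unit vector with the direction of x0 maps the other
  unit vectors to an orthonormal basis w 1, ..., w (d - 1) of the complement of x0;
  all other indices give the zero vector.\<close>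
definition perp_basis :: "nat \<Rightarrow> vec \<Rightarrow> nat \<Rightarrow> vec" where
  "perp_basis d x0 j = (if 1 \<le> j \<and> j < d then householder d x0 (unit_vec j) else (\<lambda>_. 0))"

lemma vinner_unit_vec: "j < d \<Longrightarrow> vinner d (unit_vec j) z = z j"
proof -
  assume j: "j < d"
  have "vinner d (unit_vec j) z = (\<Sum>i<d. if i = j then z i else 0)"
    unfolding vinner_def unit_vec_def by (intro sum.cong) auto
  also have "\<dots> = z j" using j by (simp add: sum.delta)
  finally show ?thesis .
qed

lemma perp_basis_Rd: "x0 \<in> Rd d \<Longrightarrow> perp_basis d x0 j \<in> Rd d"
  by (auto simp: Rd_def perp_basis_def householder_def householder_dir_def unit_vec_def Let_def)

lemma perp_basis_0 [simp]: "perp_basis d x0 0 = (\<lambda>_. 0)"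
  by (simp add: perp_basis_def)

lemma vinner_householder:
  "vinner d (householder d x0 y) (householder d x0 z) = vinner d y z"
proof -
  define v where "v = householder_dir d x0"
  define N where "N = vinner d v v"
  show ?thesis
  proof (cases "N = 0")
    case False
    define \<alpha> where "\<alpha> y = 2 * vinner d v y / N" for y
    have H: "householder d x0 y = (\<lambda>k. y k - \<alpha> y * v k)" for y
      using False unfolding householder_def \<alpha>_def by (simp add: v_def N_def Let_def)
    have "vinner d (householder d x0 y) (householder d x0 z)
        = vinner d y z - \<alpha> z * vinner d y v - \<alpha> y * (vinner d v z - \<alpha> z * N)"
      unfolding H vinner_diff_left vinner_diff_right vinner_scale_left vinner_scale_right N_def
      by (simp add: algebra_simps)
    also have "\<dots> = vinner d y z"
      using False by (simp add: \<alpha>_def field_simps vinner_commute[of d y v] power2_eq_square)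
    finally show ?thesis .
  qed (simp add: householder_def v_def N_def Let_def)
qed

lemma perp_basis_orthonormal:
  assumes "x0 \<in> Rd d"
  shows "vinner d (perp_basis d x0 j) (perp_basis d x0 j') = (if j = j' \<and> 1 \<le> j \<and> j < d then 1 else 0)"
proof (cases "1 \<le> j \<and> j < d \<and> 1 \<le> j' \<and> j' < d")
  case True
  then have "vinner d (perp_basis d x0 j) (perp_basis d x0 j') = unit_vec j' j"
    by (simp add: perp_basis_def vinner_householder vinner_unit_vec)
  then show ?thesis using True by (auto simp: unit_vec_def)
qed (auto simp: perp_basis_def vinner_def)

lemma vinner_perp_basis_x0:
  assumes x0: "x0 \<in> Rd d"
  shows "vinner d (perp_basis d x0 j) x0 = 0"
proof (cases "1 \<le> j \<and> j < d")
  case True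
  then have d0: "0 < d" by simp
  define v where "v = householder_dir d x0"
  define r where "r = vnorm d x0"
  have vj: "v j = x0 j" using True by (simp add: v_def householder_dir_def unit_vec_def)
  show ?thesis
  proof (cases "vinner d v v = 0")
    case True0: True
    have "v \<in> Rd d" using x0 d0 by (auto simp: Rd_def v_def householder_dir_def unit_vec_def)
    then have "v j = 0" using True0 vinner_self_eq_0 by fastforce
    then show ?thesis using True True0 vj vinner_unit_vec[of j d x0]
      by (simp add: perp_basis_def householder_def v_def[symmetric] Let_def)
  next
    case False
    have rr: "vinner d x0 x0 = r^2" by (simp add: r_def vnorm_power2)
    have e00: "vinner d (unit_vec 0) (unit_vec 0) = 1"
      using d0 vinner_unit_vec[of 0 d "unit_vec 0"] by (simp add: unit_vec_def)
    have vx: "vinner d v x0 = r^2 - r * x0 0"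
      unfolding v_def householder_dir_def vinner_diff_left vinner_scale_left r_def[symmetric] rr
      using d0 by (simp add: vinner_unit_vec)
    have vv: "vinner d v v = 2 * r^2 - 2 * r * x0 0"
      unfolding v_def householder_dir_def vinner_diff_left vinner_diff_right vinner_scale_left
        vinner_scale_right r_def[symmetric] rr e00
      using d0 by (simp add: vinner_unit_vec vinner_commute[of d x0 "unit_vec 0"] power2_eq_square
          algebra_simps)
    have "perp_basis d x0 j = (\<lambda>k. unit_vec j k - (2 * vinner d v (unit_vec j) / vinner d v v) * v k)"
      using True False by (simp add: perp_basis_def householder_def v_def[symmetric] Let_def)
    then have "vinner d (perp_basis d x0 j) x0
        = vinner d (unit_vec j) x0 - 2 * vinner d v (unit_vec j) / vinner d v v * vinner d v x0"
      by (simp only: vinner_diff_left vinner_scale_left)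
    also have "\<dots> = x0 j - v j * (2 * vinner d v x0 / vinner d v v)"
      using True by (simp add: vinner_unit_vec vinner_commute[of d v "unit_vec j"])
    also have "2 * vinner d v x0 / vinner d v v = 1" using False vx vv by (simp add: field_simps)
    finally show ?thesis using vj by simp
  qed
qed (auto simp: perp_basis_def vinner_def)

lemma perp_basis_Bessel:
  assumes x0: "x0 \<in> Rd d" and S: "finite S" "S \<subseteq> {1..<d}"
  shows "(\<Sum>j\<in>S. (vinner d (perp_basis d x0 j) z)^2) \<le> vinner d z z"
proof -
  define \<beta> where "\<beta> j = vinner d (perp_basis d x0 j) z" for j
  define y where "y = lin_comb S \<beta> (perp_basis d x0)"
  have o: "orthogonal_family d S (perp_basis d x0)"
    unfolding orthogonal_family_def using x0 by (auto simp: perp_basis_orthonormal)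
  have yy: "vinner d y y = (\<Sum>j\<in>S. (\<beta> j)^2)"
    unfolding y_def using vinner_lin_comb_lin_comb_orthogonal[OF o S(1)] S(2) x0
    by (auto simp: perp_basis_orthonormal power2_eq_square intro!: sum.cong)
  have yz: "vinner d y z = (\<Sum>j\<in>S. (\<beta> j)^2)"
    unfolding y_def vinner_lin_comb_left by (simp add: \<beta>_def power2_eq_square)
  have "0 \<le> vinner d (\<lambda>k. z k - y k) (\<lambda>k. z k - y k)" by (rule vinner_self_nonneg)
  also have "\<dots> = vinner d z z - 2 * vinner d y z + vinner d y y"
    by (simp add: vinner_diff_left vinner_diff_right vinner_commute[of d z y])
  finally show ?thesis unfolding yy yz \<beta>_def by simp
qed

section \<open>Zero-respecting progress of PIFO iterates\<close>

definition vanishes_beyond :: "nat \<Rightarrow> vec \<Rightarrow> nat \<Rightarrow> vec \<Rightarrow> bool" where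
  "vanishes_beyond d x0 k x \<longleftrightarrow> x \<in> Rd d \<and> (\<forall>j. k < j \<longrightarrow> vinner d (perp_basis d x0 j) x = 0)"

definition chain_link :: "nat \<Rightarrow> vec \<Rightarrow> nat \<Rightarrow> vec" where
  "chain_link d x0 l = (\<lambda>k. perp_basis d x0 (Suc l) k - perp_basis d x0 l k)"

lemma chain_link_Rd: "x0 \<in> Rd d \<Longrightarrow> chain_link d x0 l \<in> Rd d"
  using perp_basis_Rd[of x0 d] by (auto simp: Rd_def chain_link_def)

lemma vinner_chain_link: "vinner d (chain_link d x0 l) x
    = vinner d (perp_basis d x0 (Suc l)) x - vinner d (perp_basis d x0 l) x"
  unfolding chain_link_def vinner_diff_left ..

lemma vinner_perp_basis_chain_link: "x0 \<in> Rd d \<Longrightarrow> vinner d (perp_basis d x0 j) (chain_link d x0 l) =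
   (if j = Suc l \<and> j < d then 1 else 0) - (if j = l \<and> 1 \<le> j \<and> j < d then 1 else 0)"
  unfolding chain_link_def vinner_diff_right by (simp add: perp_basis_orthonormal)

lemma vinner_chain_link_self: "x0 \<in> Rd d \<Longrightarrow> vinner d (chain_link d x0 l) (chain_link d x0 l) \<le> 2"
  unfolding vinner_chain_link by (simp add: vinner_perp_basis_chain_link)

lemma chain_link_orthogonal: "x0 \<in> Rd d \<Longrightarrow> l \<noteq> l' \<Longrightarrow> Suc l \<noteq> l' \<Longrightarrow> l \<noteq> Suc l' \<Longrightarrow>
    vinner d (chain_link d x0 l) (chain_link d x0 l') = 0"
  unfolding vinner_chain_link by (simp add: vinner_perp_basis_chain_link)

lemma vanishes_beyond_mono: "k \<le> k' \<Longrightarrow> vanishes_beyond d x0 k x \<Longrightarrow> vanishes_beyond d x0 k' x"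
  unfolding vanishes_beyond_def by auto

lemma vanishes_beyond_diff:
  "vanishes_beyond d x0 k x \<Longrightarrow> vanishes_beyond d x0 k y \<Longrightarrow> vanishes_beyond d x0 k (\<lambda>i. x i - y i)"
  unfolding vanishes_beyond_def by (auto simp: Rd_def vinner_diff_right)

lemma vanishes_beyond_span:
  assumes "\<forall>v\<in>S. vanishes_beyond d x0 k v" "in_span S x"
  shows "vanishes_beyond d x0 k x"
proof -
  obtain F c where F: "finite F" "F \<subseteq> S" "x = lin_comb F c id"
    using assms(2) unfolding in_span_def lin_comb_def by auto
  show ?thesis
    unfolding vanishes_beyond_def F(3) vinner_lin_comb_right
    using assms(1) F(2) by (auto intro!: lin_comb_Rd sum.neutral simp: vanishes_beyond_def)
qed

text \<open>A component built on the links with hard = False only sees the first link and has zero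
  target, so a query to it cannot uncover a new coordinate; with hard = True it can uncover
  at most one, because its target vanishes except on the first link.\<close>
definition progress_component :: "nat \<Rightarrow> vec \<Rightarrow> real \<Rightarrow> nat set \<Rightarrow> (nat \<Rightarrow> real) \<Rightarrow> bool \<Rightarrow> bool" where
  "progress_component d x0 c J b hard \<longleftrightarrow> finite J \<and> c \<ge> 0 \<and> orthogonal_family d J (chain_link d x0) \<and>
     (if hard then (\<forall>l\<in>J. 1 \<le> l \<longrightarrow> b l = 0) else (\<forall>l\<in>J. l = 0 \<and> b l = 0))"

lemma vanishes_beyond_link_comb_Suc:
  assumes x0: "x0 \<in> Rd d" and x: "vanishes_beyond d x0 k x" and b: "\<forall>l\<in>J. 1 \<le> l \<longrightarrow> b l = 0"
  shows "vanishes_beyond d x0 (Suc k)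
      (lin_comb J (\<lambda>l. \<phi> l * (vinner d (chain_link d x0 l) x - b l)) (chain_link d x0))"
  unfolding vanishes_beyond_def
proof (intro conjI allI impI)
  show "lin_comb J (\<lambda>l. \<phi> l * (vinner d (chain_link d x0 l) x - b l)) (chain_link d x0) \<in> Rd d"
    using chain_link_Rd[OF x0] by (intro lin_comb_Rd)
  fix j assume j: "Suc k < j"
  have "(vinner d (chain_link d x0 l) x - b l) * vinner d (perp_basis d x0 j) (chain_link d x0 l) = 0"
    if l: "l \<in> J" for l
  proof (cases "j = Suc l \<or> j = l")
    case True
    then have "k < l" "1 \<le> l" using j by auto
    then have "b l = 0" "vinner d (chain_link d x0 l) x = 0"
      using b l x unfolding vinner_chain_link vanishes_beyond_def by auto
    then show ?thesis by simp
  qed (use x0 in \<open>simp add: vinner_perp_basis_chain_link\<close>)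
  then show "vinner d (perp_basis d x0 j)
      (lin_comb J (\<lambda>l. \<phi> l * (vinner d (chain_link d x0 l) x - b l)) (chain_link d x0)) = 0"
    unfolding vinner_lin_comb_right by (simp add: sum.neutral)
qed

lemma vanishes_beyond_link_comb:
  assumes x0: "x0 \<in> Rd d" and x: "vanishes_beyond d x0 k x" and b: "\<forall>l\<in>J. l = 0 \<and> b l = 0"
  shows "vanishes_beyond d x0 k
      (lin_comb J (\<lambda>l. \<phi> l * (vinner d (chain_link d x0 l) x - b l)) (chain_link d x0))"
  unfolding vanishes_beyond_def
proof (intro conjI allI impI)
  show "lin_comb J (\<lambda>l. \<phi> l * (vinner d (chain_link d x0 l) x - b l)) (chain_link d x0) \<in> Rd d"
    using chain_link_Rd[OF x0] by (intro lin_comb_Rd)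
  fix j assume j: "k < j"
  have "(vinner d (chain_link d x0 l) x - b l) * vinner d (perp_basis d x0 j) (chain_link d x0 l) = 0"
    if l: "l \<in> J" for l
  proof -
    have l0: "l = 0" "b l = 0" using b l by auto
    show ?thesis
    proof (cases "j = 1")
      case True
      then show ?thesis using x j l0 by (simp add: vinner_chain_link vanishes_beyond_def)
    qed (use x0 l0 in \<open>simp add: vinner_perp_basis_chain_link\<close>)
  qed
  then show "vinner d (perp_basis d x0 j)
      (lin_comb J (\<lambda>l. \<phi> l * (vinner d (chain_link d x0 l) x - b l)) (chain_link d x0)) = 0"
    unfolding vinner_lin_comb_right by (simp add: sum.neutral)
qed

lemma vanishes_beyond_grad_prox:
  assumes x0: "x0 \<in> Rd d" and ok: "progress_component d x0 c J b hard"
    and x: "vanishes_beyond d x0 k x" and g: "\<gamma> > 0"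
  shows "vanishes_beyond d x0 (k + (if hard then 1 else 0)) (grad d (lsq d c J (chain_link d x0) b) x)"
    and "vanishes_beyond d x0 (k + (if hard then 1 else 0)) (prox d \<gamma> (lsq d c J (chain_link d x0) b) x)"
proof -
  have J: "finite J" and c: "c \<ge> 0" and o: "orthogonal_family d J (chain_link d x0)"
    using ok by (auto simp: progress_component_def)
  have a: "\<And>l. l \<in> J \<Longrightarrow> chain_link d x0 l \<in> Rd d" using chain_link_Rd[OF x0] by auto
  have comb: "vanishes_beyond d x0 (k + (if hard then 1 else 0))
      (lin_comb J (\<lambda>l. \<phi> l * (vinner d (chain_link d x0 l) x - b l)) (chain_link d x0))" for \<phi>
    using ok vanishes_beyond_link_comb_Suc[OF x0 x] vanishes_beyond_link_comb[OF x0 x]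
    by (cases hard) (auto simp: progress_component_def)
  show "vanishes_beyond d x0 (k + (if hard then 1 else 0)) (grad d (lsq d c J (chain_link d x0) b) x)"
    using comb[of "\<lambda>_. c"] by (simp add: grad_lsq[OF J a c] lsq_grad_def)
  define \<phi> where "\<phi> l = c * \<gamma> / (1 + c * \<gamma> * vinner d (chain_link d x0 l) (chain_link d x0 l))" for l
  have "prox d \<gamma> (lsq d c J (chain_link d x0) b) x = (\<lambda>i. x i
      - lin_comb J (\<lambda>l. \<phi> l * (vinner d (chain_link d x0 l) x - b l)) (chain_link d x0) i)"
    using x unfolding vanishes_beyond_def
    by (simp add: prox_lsq[OF J a c g o] lsq_prox_def lin_comb_def \<phi>_def)
  then show "vanishes_beyond d x0 (k + (if hard then 1 else 0)) (prox d \<gamma> (lsq d c J (chain_link d x0) b) x)"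
    using vanishes_beyond_diff[OF vanishes_beyond_mono[OF _ x] comb[of \<phi>]] by simp
qed

definition hits :: "nat set \<Rightarrow> (nat \<Rightarrow> nat) \<Rightarrow> nat \<Rightarrow> nat" where
  "hits H \<iota> t = card {s\<in>{1..t}. \<iota> s \<in> H}"

lemma hits_Suc: "hits H \<iota> (Suc t) = hits H \<iota> t + (if \<iota> (Suc t) \<in> H then 1 else 0)"
proof -
  have "{s\<in>{1..Suc t}. \<iota> s \<in> H} = {s\<in>{1..t}. \<iota> s \<in> H} \<union> (if \<iota> (Suc t) \<in> H then {Suc t} else {})"
    by (auto simp: le_Suc_eq)
  then show ?thesis unfolding hits_def by (auto simp: card_insert_if)
qed

lemma hits_mono: "s \<le> t \<Longrightarrow> hits H \<iota> s \<le> hits H \<iota> t"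
  unfolding hits_def by (intro card_mono) auto

lemma length_pifo_hist: "length (pifo_hist \<gamma> x0 R d fs \<iota> t) = t"
  by (induction t) (auto simp: Let_def)

lemma take_pifo_hist: "s \<le> t \<Longrightarrow> take s (pifo_hist \<gamma> x0 R d fs \<iota> t) = pifo_hist \<gamma> x0 R d fs \<iota> s"
proof (induction t)
  case (Suc t)
  show ?case
  proof (cases "s = Suc t")
    case False
    then show ?thesis using Suc length_pifo_hist[of \<gamma> x0 R d fs \<iota> t] by (simp add: Let_def)
  qed (metis order_refl take_all length_pifo_hist)
qed simp

lemma nth_pifo_hist:
  assumes "s < t"
  shows "pifo_hist \<gamma> x0 R d fs \<iota> t ! s =
    (\<iota> (Suc s), fs (\<iota> (Suc s)) (pifo_iter \<gamma> x0 R d fs \<iota> s),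
     grad d (fs (\<iota> (Suc s))) (pifo_iter \<gamma> x0 R d fs \<iota> s),
     prox d (\<gamma> (Suc s)) (fs (\<iota> (Suc s))) (pifo_iter \<gamma> x0 R d fs \<iota> s))"
proof -
  have "pifo_hist \<gamma> x0 R d fs \<iota> t ! s = take (Suc s) (pifo_hist \<gamma> x0 R d fs \<iota> t) ! s"
    using assms by simp
  also have "\<dots> = pifo_hist \<gamma> x0 R d fs \<iota> (Suc s) ! s"
    using assms by (simp add: take_pifo_hist)
  finally show ?thesis
    using length_pifo_hist[of \<gamma> x0 R d fs \<iota> s] by (simp add: Let_def nth_append pifo_iter_def)
qed

definition query_progress :: "nat \<Rightarrow> vec \<Rightarrow> (nat \<Rightarrow> vec \<Rightarrow> real) \<Rightarrow> nat set \<Rightarrow> (nat \<Rightarrow> real) \<Rightarrow> bool" where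
  "query_progress d x0 fs H \<gamma> \<longleftrightarrow> (\<forall>i k x t. 1 \<le> t \<longrightarrow> vanishes_beyond d x0 k x \<longrightarrow>
      vanishes_beyond d x0 (k + (if i \<in> H then 1 else 0)) (grad d (fs i) x) \<and>
      vanishes_beyond d x0 (k + (if i \<in> H then 1 else 0)) (prox d (\<gamma> t) (fs i) x))"

lemma pifo_iter_vanishes_beyond_hits:
  assumes alg: "pifo_algorithm n p \<gamma> x0 R" and progress: "query_progress d (x0 d) fs H \<gamma>"
  shows "vanishes_beyond d (x0 d) (hits H \<iota> t) (pifo_iter \<gamma> x0 R d fs \<iota> t)"
proof (induction t rule: less_induct)
  case (less t)
  let ?x = "pifo_iter \<gamma> x0 R d fs \<iota>"
  have x0R: "x0 d \<in> Rd d" using alg by (simp add: pifo_algorithm_def)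
  have start: "vanishes_beyond d (x0 d) k (x0 d)" for k
    using vinner_perp_basis_x0[OF x0R] x0R by (simp add: vanishes_beyond_def)
  have earlier: "vanishes_beyond d (x0 d) (hits H \<iota> t) (?x s)" if "s < t" for s
    using less.IH[OF that] hits_mono[of s t H \<iota>] that by (auto intro: vanishes_beyond_mono)
  have queried: "vanishes_beyond d (x0 d) (hits H \<iota> t) (grad d (fs (\<iota> (Suc s))) (?x s)) \<and>
      vanishes_beyond d (x0 d) (hits H \<iota> t) (prox d (\<gamma> (Suc s)) (fs (\<iota> (Suc s))) (?x s))"
    if s: "s < t" for s
    using progress[unfolded query_progress_def, rule_format, OF _ less.IH[OF s], of "Suc s" "\<iota> (Suc s)"]
      hits_mono[of "Suc s" t H \<iota>] s
    by (auto simp: hits_Suc intro: vanishes_beyond_mono)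
  show ?case
  proof (cases "t = 0")
    case False
    define h where "h = pifo_hist \<gamma> x0 R d fs \<iota> t"
    have "h \<noteq> []" using False length_pifo_hist[of \<gamma> x0 R d fs \<iota> t] by (auto simp: h_def)
    then have span: "in_span (pifo_span_set x0 R d h) (R d h)"
      using alg by (simp add: pifo_algorithm_def)
    have "vanishes_beyond d (x0 d) (hits H \<iota> t) v" if "v \<in> pifo_span_set x0 R d h" for v
    proof -
      from that consider "v = x0 d" | s where "s < t" "v = ?x s"
        | s where "s < t" "v = grad d (fs (\<iota> (Suc s))) (?x s)"
        | s where "s < t" "v = prox d (\<gamma> (Suc s)) (fs (\<iota> (Suc s))) (?x s)"
        unfolding pifo_span_set_def h_def using length_pifo_hist[of \<gamma> x0 R d fs \<iota> t]
        by (auto simp: take_pifo_hist nth_pifo_hist pifo_iter_def)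
      then show ?thesis using start earlier queried by cases auto
    qed
    then show ?thesis using False vanishes_beyond_span[OF _ span] by (simp add: pifo_iter_def h_def)
  qed (simp add: pifo_iter_def start)
qed

lemma prob_draw_in:
  fixes s t :: nat and p :: "nat \<Rightarrow> real"
  assumes p: "(\<Sum>j<n. p j) = 1" and s: "s \<in> {1..t}"
  shows "(\<Sum>\<iota>\<in>PiE {1..t} (\<lambda>_. {..<n}). (\<Prod>r\<in>{1..t}. p (\<iota> r)) * (if \<iota> s \<in> H then 1 else 0))
       = (\<Sum>j<n. if j \<in> H then p j else 0)"
proof -
  define g where "g r j = (if r = s then (if j \<in> H then p j else 0) else p j)" for r j
  have "(\<Prod>r\<in>{1..t}. p (\<iota> r)) * (if \<iota> s \<in> H then 1 else 0) = (\<Prod>r\<in>{1..t}. g r (\<iota> r))" for \<iota>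
  proof -
    have "(\<Prod>r\<in>{1..t}. g r (\<iota> r)) = g s (\<iota> s) * (\<Prod>r\<in>{1..t}-{s}. g r (\<iota> r))"
      by (rule prod.remove[OF finite_atLeastAtMost s])
    also have "(\<Prod>r\<in>{1..t}-{s}. g r (\<iota> r)) = (\<Prod>r\<in>{1..t}-{s}. p (\<iota> r))"
      by (intro prod.cong) (auto simp: g_def)
    also have "(\<Prod>r\<in>{1..t}. p (\<iota> r)) = p (\<iota> s) * (\<Prod>r\<in>{1..t}-{s}. p (\<iota> r))"
      using s by (simp add: prod.remove)
    ultimately show ?thesis by (simp add: g_def)
  qed
  then have "(\<Sum>\<iota>\<in>PiE {1..t} (\<lambda>_. {..<n}). (\<Prod>r\<in>{1..t}. p (\<iota> r)) * (if \<iota> s \<in> H then 1 else 0))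
      = (\<Prod>r\<in>{1..t}. \<Sum>j<n. g r j)"
    using prod_sum_PiE[of "{1..t}" "\<lambda>_. {..<n}" g] by simp
  also have "\<dots> = (\<Sum>j<n. g s j) * (\<Prod>r\<in>{1..t}-{s}. \<Sum>j<n. g r j)"
    by (rule prod.remove[OF finite_atLeastAtMost s])
  also have "(\<Prod>r\<in>{1..t}-{s}. \<Sum>j<n. g r j) = 1"
    using p by (intro prod.neutral) (auto simp: g_def)
  finally show ?thesis by (simp add: g_def)
qed

lemma expected_hits:
  fixes t :: nat
  assumes "(\<Sum>j<n. p j) = 1"
  shows "(\<Sum>\<iota>\<in>PiE {1..t} (\<lambda>_. {..<n}). (\<Prod>s\<in>{1..t}. p (\<iota> s)) * real (hits H \<iota> t))
       = real t * (\<Sum>j<n. if j \<in> H then p j else 0)"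
proof -
  have "real (hits H \<iota> t) = (\<Sum>s\<in>{1..t}. if \<iota> s \<in> H then 1 else 0)" for \<iota>
    unfolding hits_def by (simp only: real_of_card sum.inter_filter[OF finite_atLeastAtMost])
  then have "(\<Sum>\<iota>\<in>PiE {1..t} (\<lambda>_. {..<n}). (\<Prod>s\<in>{1..t}. p (\<iota> s)) * real (hits H \<iota> t))
     = (\<Sum>s\<in>{1..t}. \<Sum>\<iota>\<in>PiE {1..t} (\<lambda>_. {..<n}). (\<Prod>r\<in>{1..t}. p (\<iota> r)) * (if \<iota> s \<in> H then 1 else 0))"
    by (simp add: sum_distrib_left) (rule sum.swap)
  also have "\<dots> = (\<Sum>s\<in>{1..t}. \<Sum>j<n. if j \<in> H then p j else 0)"
    by (intro sum.cong refl) (rule prob_draw_in[OF assms])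
  finally show ?thesis by simp
qed

lemma pifo_expect_lower_bound:
  assumes alg: "pifo_algorithm n p \<gamma> x0 R"
    and pointwise: "\<And>\<iota>. G - G * real (hits H \<iota> t) / M \<le> F (pifo_iter \<gamma> x0 R d fs \<iota> t) - F_min"
  shows "G - G * (real t * (\<Sum>j<n. if j \<in> H then p j else 0)) / M \<le> pifo_expect n p \<gamma> x0 R d fs F t - F_min"
proof -
  have p0: "\<And>j. p j \<ge> 0" and p: "(\<Sum>j<n. p j) = 1" using alg by (auto simp: pifo_algorithm_def)
  define w where "w \<iota> = (\<Prod>s\<in>{1..t}. p (\<iota> s))" for \<iota>
  define P where "P = PiE {1..t} (\<lambda>_. {..<n::nat})"
  have w0: "w \<iota> \<ge> 0" for \<iota> unfolding w_def using p0 by (intro prod_nonneg) auto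
  have w1: "(\<Sum>\<iota>\<in>P. w \<iota>) = 1"
    unfolding w_def P_def using prod_sum_PiE[of "{1..t}" "\<lambda>_. {..<n}" "\<lambda>_. p"] p by simp
  have wh: "(\<Sum>\<iota>\<in>P. w \<iota> * real (hits H \<iota> t)) = real t * (\<Sum>j<n. if j \<in> H then p j else 0)"
    unfolding w_def P_def by (rule expected_hits[OF p])
  have "G - G * (real t * (\<Sum>j<n. if j \<in> H then p j else 0)) / M
      = G * (\<Sum>\<iota>\<in>P. w \<iota>) - G / M * (\<Sum>\<iota>\<in>P. w \<iota> * real (hits H \<iota> t))"
    unfolding w1 wh by simp
  also have "\<dots> = (\<Sum>\<iota>\<in>P. w \<iota> * (G - G * real (hits H \<iota> t) / M))"
    by (simp add: algebra_simps sum_subtractf sum_distrib_left sum_divide_distrib)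
  also have "\<dots> \<le> (\<Sum>\<iota>\<in>P. w \<iota> * (F (pifo_iter \<gamma> x0 R d fs \<iota> t) - F_min))"
    using w0 pointwise by (intro sum_mono mult_left_mono) auto
  also have "\<dots> = pifo_expect n p \<gamma> x0 R d fs F t - F_min"
    using w1 unfolding pifo_expect_def w_def[symmetric] P_def[symmetric]
    by (simp add: algebra_simps sum_subtractf flip: sum_distrib_left)
  finally show ?thesis .
qed

definition hard_instance ::
  "nat \<Rightarrow> real \<Rightarrow> real \<Rightarrow> real \<Rightarrow> (nat \<Rightarrow> real) \<Rightarrow> (nat \<Rightarrow> real) \<Rightarrow> (nat \<Rightarrow> vec)
   \<Rightarrow> (nat \<Rightarrow> obs list \<Rightarrow> vec) \<Rightarrow> nat \<Rightarrow> real \<Rightarrow> bool" where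
  "hard_instance n L B \<epsilon> p \<gamma> x0 R d T \<longleftrightarrow> (\<exists>(fs::nat \<Rightarrow> vec \<Rightarrow> real) xstar.
     (\<forall>i<n. \<forall>x\<in>Rd d. \<exists>g. has_grad d (fs i) x g) \<and>
     (\<forall>i<n. \<forall>t\<ge>1. \<forall>x\<in>Rd d. \<exists>!u. is_prox d (\<gamma> t) (fs i) x u) \<and>
     avg_smooth d n L fs \<and>
     convex_Rd d (favg n fs) \<and>
     xstar \<in> Rd d \<and> (\<forall>y\<in>Rd d. favg n fs xstar \<le> favg n fs y) \<and>
     vnorm d (vsub (x0 d) xstar) \<le> B \<and>
     (\<forall>t::nat. real t \<le> T \<longrightarrow> pifo_expect n p \<gamma> x0 R d fs (favg n fs) t - favg n fs xstar \<ge> \<epsilon>))"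

lemma lsq_link_components:
  fixes \<gamma> :: "nat \<Rightarrow> real"
  assumes x0: "x0 \<in> Rd d" and \<gamma>: "\<forall>t\<ge>1. \<gamma> t > 0"
    and components: "\<And>i. fs i = lsq d (c i) (J i) (chain_link d x0) (b i)"
    and progress: "\<And>i. progress_component d x0 (c i) (J i) (b i) (i \<in> H)"
  shows "\<forall>i<n. \<forall>x\<in>Rd d. \<exists>g. has_grad d (fs i) x g"
    and "\<forall>i<n. \<forall>t\<ge>1. \<forall>x\<in>Rd d. \<exists>!u. is_prox d (\<gamma> t) (fs i) x u"
    and "convex_Rd d (favg n fs)"
    and "query_progress d x0 fs H \<gamma>"
proof -
  have J: "finite (J i)" "c i \<ge> 0" "orthogonal_family d (J i) (chain_link d x0)" for i
    using progress[of i] by (auto simp: progress_component_def)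
  note links = chain_link_Rd[OF x0]
  have "has_grad d (fs i) x (lsq_grad d (c i) (J i) (chain_link d x0) (b i) x)" for i x
    unfolding components using J links by (intro has_grad_lsq) auto
  then show "\<forall>i<n. \<forall>x\<in>Rd d. \<exists>g. has_grad d (fs i) x g" by blast
  have "\<exists>!u. is_prox d (\<gamma> t) (fs i) x u" if "1 \<le> t" "x \<in> Rd d" for i t x
    unfolding components using that J links \<gamma> by (simp add: is_prox_lsq_iff)
  then show "\<forall>i<n. \<forall>t\<ge>1. \<forall>x\<in>Rd d. \<exists>!u. is_prox d (\<gamma> t) (fs i) x u" by blast
  show "convex_Rd d (favg n fs)"
    by (rule favg_convex) (simp add: components lsq_convex J(2))
  show "query_progress d x0 fs H \<gamma>"
    unfolding query_progress_def components
    using vanishes_beyond_grad_prox[OF x0 progress] \<gamma> by blast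
qed

text \<open>Every iterate is G-suboptimal until M draws from H have occurred, so by linearity the
  expected suboptimality after t queries is at least G (1 - t q / M), q the probability of H.\<close>
lemma hard_instanceI:
  fixes M :: nat
  assumes alg: "pifo_algorithm n p \<gamma> x0 R"
    and components: "\<And>i. fs i = lsq d (c i) (J i) (chain_link d (x0 d)) (b i)"
    and progress: "\<And>i. progress_component d (x0 d) (c i) (J i) (b i) (i \<in> H)"
    and smooth: "avg_smooth d n L fs"
    and xstar: "xstar \<in> Rd d" "\<And>y. y \<in> Rd d \<Longrightarrow> favg n fs xstar \<le> favg n fs y"
      "vnorm d (vsub (x0 d) xstar) \<le> B"
    and gap: "\<And>k x. vanishes_beyond d (x0 d) k x \<Longrightarrow> k < M \<Longrightarrow> G \<le> favg n fs x - favg n fs xstar"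
    and G: "0 \<le> \<epsilon>" "2 * \<epsilon> \<le> G"
    and M: "0 < M" "T * (\<Sum>j<n. if j \<in> H then p j else 0) \<le> real M / 2"
  shows "hard_instance n L B \<epsilon> p \<gamma> x0 R d T"
proof -
  have x0: "x0 d \<in> Rd d" and \<gamma>: "\<forall>t\<ge>1. \<gamma> t > 0" and p: "\<And>j. 0 \<le> p j"
    using alg by (auto simp: pifo_algorithm_def)
  note regular = lsq_link_components[OF x0 \<gamma> components progress]
  have iter: "vanishes_beyond d (x0 d) (hits H \<iota> t) (pifo_iter \<gamma> x0 R d fs \<iota> t)" for \<iota> t
    by (rule pifo_iter_vanishes_beyond_hits[OF alg regular(4)])
  have pointwise: "G - G * real (hits H \<iota> t) / real M \<le> favg n fs (pifo_iter \<gamma> x0 R d fs \<iota> t) - favg n fs xstar"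
    for \<iota> t
  proof (cases "hits H \<iota> t < M")
    case True
    have "0 \<le> G * real (hits H \<iota> t) / real M" using G by simp
    then show ?thesis using gap[OF iter True] by linarith
  next
    case False
    then have "G \<le> G * real (hits H \<iota> t) / real M" using G M by (simp add: field_simps mult_left_mono)
    moreover have "favg n fs xstar \<le> favg n fs (pifo_iter \<gamma> x0 R d fs \<iota> t)"
      using xstar(2) iter[of \<iota> t] by (simp add: vanishes_beyond_def)
    ultimately show ?thesis by linarith
  qed
  have "\<epsilon> \<le> pifo_expect n p \<gamma> x0 R d fs (favg n fs) t - favg n fs xstar" if t: "real t \<le> T" for t
  proof -
    define q where "q = (\<Sum>j<n. if j \<in> H then p j else 0)"
    have "real t * q \<le> T * q" using t p by (intro mult_right_mono) (simp_all add: q_def sum_nonneg)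
    then have "G * (real t * q) / real M \<le> G / 2" using G M by (simp add: q_def field_simps mult_left_mono)
    then show ?thesis
      using pifo_expect_lower_bound[OF alg pointwise, of t] G by (simp add: q_def)
  qed
  then show ?thesis
    unfolding hard_instance_def using regular(1-3)[where n = n] smooth xstar by blast
qed

section \<open>The chain instance\<close>

lemma grad_lsq_diff_power2:
  assumes x0: "x0 \<in> Rd d" and J: "finite J" and c: "c \<ge> 0"
    and o: "orthogonal_family d J (chain_link d x0)"
  shows "(vnorm d (vsub (grad d (lsq d c J (chain_link d x0) b) x) (grad d (lsq d c J (chain_link d x0) b) y)))^2
     = (\<Sum>l\<in>J. c^2 * (vinner d (chain_link d x0 l) (vsub x y))^2
          * vinner d (chain_link d x0 l) (chain_link d x0 l))"
proof -
  have a: "\<And>l. l \<in> J \<Longrightarrow> chain_link d x0 l \<in> Rd d" using chain_link_Rd[OF x0] by auto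
  have diff: "vsub (lsq_grad d c J (chain_link d x0) b x) (lsq_grad d c J (chain_link d x0) b y)
      = lin_comb J (\<lambda>l. c * vinner d (chain_link d x0 l) (vsub x y)) (chain_link d x0)"
    unfolding lsq_grad_def lin_comb_def vsub_def
    by (auto simp: vinner_diff_right[unfolded vsub_def] algebra_simps sum_subtractf[symmetric]
        intro!: ext sum.cong)
  have g: "grad d (lsq d c J (chain_link d x0) b) z = lsq_grad d c J (chain_link d x0) b z" for z
    using J a c by (rule grad_lsq)
  show ?thesis
    unfolding g diff vnorm_power2 vinner_lin_comb_lin_comb_orthogonal[OF o J]
    by (simp add: power2_eq_square mult_ac)
qed

definition chain_split :: "nat \<Rightarrow> nat \<Rightarrow> nat \<Rightarrow> nat \<Rightarrow> nat set" where
  "chain_split m iA iB i =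
     (if i = iA then {l. l < m \<and> even l} else if i = iB then {l. l < m \<and> odd l} else {})"

definition chain_rhs :: "real \<Rightarrow> nat \<Rightarrow> real" where
  "chain_rhs s l = (if l = 0 then s else 0)"

definition chain_point :: "nat \<Rightarrow> vec \<Rightarrow> nat \<Rightarrow> real \<Rightarrow> vec" where
  "chain_point d x0 m s = (\<lambda>k. x0 k + s * lin_comb {1..m} (\<lambda>_. 1) (perp_basis d x0) k)"

lemma finite_chain_split: "finite (chain_split m iA iB i)"
  by (simp add: chain_split_def)

lemma chain_split_orthogonal: "x0 \<in> Rd d \<Longrightarrow> orthogonal_family d (chain_split m iA iB i) (chain_link d x0)"
  unfolding orthogonal_family_def chain_split_def by (auto intro!: chain_link_orthogonal)

lemma sum_even_odd:
  fixes m :: nat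
  shows "(\<Sum>l\<in>{l. l < m \<and> even l}. f l) + (\<Sum>l\<in>{l. l < m \<and> odd l}. f l) = (\<Sum>l<m. f l)"
  by (subst sum.union_disjoint[symmetric]) (auto intro: finite_subset[of _ "{..<m}"] sum.cong)

lemma sum_two_nonzero:
  fixes n :: nat
  assumes "iA \<noteq> iB" "iA < n" "iB < n" "\<And>i. i < n \<Longrightarrow> i \<noteq> iA \<Longrightarrow> i \<noteq> iB \<Longrightarrow> f i = 0"
  shows "(\<Sum>i<n. f i) = f iA + f iB"
proof -
  have "(\<Sum>i<n. f i) = (\<Sum>i\<in>{iA, iB}. f i)"
    using assms by (intro sum.mono_neutral_right) auto
  then show ?thesis using assms by simp
qed

lemma favg_chain:
  fixes n :: nat
  assumes "iA \<noteq> iB" "iA < n" "iB < n"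
  shows "favg n (\<lambda>i. lsq d (real n * \<mu>) (chain_split m iA iB i) a (chain_rhs s)) x
     = \<mu> / 2 * (\<Sum>l<m. (vinner d (a l) x - chain_rhs s l)^2)"
proof -
  have "(\<Sum>i<n. lsq d (real n * \<mu>) (chain_split m iA iB i) a (chain_rhs s) x)
     = lsq d (real n * \<mu>) (chain_split m iA iB iA) a (chain_rhs s) x
       + lsq d (real n * \<mu>) (chain_split m iA iB iB) a (chain_rhs s) x"
    using assms by (intro sum_two_nonzero) (auto simp: lsq_def chain_split_def)
  also have "\<dots> = real n * \<mu> / 2 * (\<Sum>l<m. (vinner d (a l) x - chain_rhs s l)^2)"
    using assms(1) unfolding lsq_def chain_split_def
    by (simp add: sum_even_odd[of _ m, symmetric] distrib_left)
  finally show ?thesis unfolding favg_def using assms by simp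
qed

lemma chain_residual_telescopes:
  "vinner d (chain_link d x0 l) x - chain_rhs s l
     = (\<lambda>j. if j = 0 then s else vinner d (perp_basis d x0 j) x) (Suc l)
     - (\<lambda>j. if j = 0 then s else vinner d (perp_basis d x0 j) x) l"
  by (simp add: vinner_chain_link chain_rhs_def)

text \<open>The residuals of the first k + 1 links telescope to -s, so by Cauchy-Schwarz their squares
  sum to at least s^2 / (k + 1).\<close>
lemma chain_gap:
  assumes x: "vanishes_beyond d x0 k x" and km: "k < m" and \<mu>: "\<mu> \<ge> 0"
  shows "\<mu> * s^2 / (2 * m) \<le> \<mu> / 2 * (\<Sum>l<m. (vinner d (chain_link d x0 l) x - chain_rhs s l)^2)"
proof -
  define V where "V j = (if j = 0 then s else vinner d (perp_basis d x0 j) x)" for j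
  define f where "f l = vinner d (chain_link d x0 l) x - chain_rhs s l" for l
  have "(\<Sum>l<Suc k. f l) = (\<Sum>l<Suc k. V (Suc l) - V l)"
    by (simp add: f_def V_def chain_residual_telescopes)
  also have "\<dots> = V (Suc k) - V 0" by (rule sum_lessThan_telescope)
  finally have "(\<Sum>l<Suc k. f l) = - s" using x by (simp add: V_def vanishes_beyond_def)
  then have "s^2 \<le> (\<Sum>l<Suc k. (f l)^2) * real (Suc k)"
    using sum_squared_le_sum_of_squares[of f "{..<Suc k}"] by simp
  also have "\<dots> \<le> (\<Sum>l<m. (f l)^2) * real m"
    using km by (intro mult_mono sum_mono2) (auto intro: sum_nonneg)
  finally have "\<mu> * s^2 / (2 * m) \<le> \<mu> * ((\<Sum>l<m. (f l)^2) * real m) / (2 * m)"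
    using \<mu> by (intro divide_right_mono mult_left_mono) auto
  also have "\<dots> = \<mu> / 2 * (\<Sum>l<m. (f l)^2)" using km by simp
  finally show ?thesis by (simp add: f_def)
qed

lemma
  assumes x0: "x0 \<in> Rd d" and md: "m < d"
  shows chain_point_Rd: "chain_point d x0 m s \<in> Rd d"
    and chain_point_residual: "\<And>l. l < m \<Longrightarrow> vinner d (chain_link d x0 l) (chain_point d x0 m s) = chain_rhs s l"
    and chain_point_dist: "(vnorm d (vsub x0 (chain_point d x0 m s)))^2 = s^2 * real m"
proof -
  let ?w = "perp_basis d x0" and ?y = "lin_comb {1..m} (\<lambda>_. 1) (perp_basis d x0)"
  show "chain_point d x0 m s \<in> Rd d"
    using x0 lin_comb_Rd[of "{1..m}" ?w d "\<lambda>_. 1"] perp_basis_Rd[OF x0]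
    by (auto simp: Rd_def chain_point_def)
  have o: "orthogonal_family d {1..m} ?w"
    using x0 by (auto simp: orthogonal_family_def perp_basis_orthonormal)
  have "vinner d (?w j) (chain_point d x0 m s) = (if 1 \<le> j \<and> j \<le> m then s else 0)" for j
  proof -
    have "(\<Sum>j'\<in>{1..m}. vinner d (?w j) (?w j')) = (\<Sum>j'\<in>{1..m}. if j' = j then (if 1 \<le> j \<and> j < d then 1 else 0) else 0)"
      using x0 by (intro sum.cong) (auto simp: perp_basis_orthonormal)
    also have "\<dots> = (if 1 \<le> j \<and> j \<le> m then 1 else 0)" using md by (subst sum.delta) auto
    finally show ?thesis
      unfolding chain_point_def vinner_add_right vinner_scale_right vinner_lin_comb_right
      by (simp add: vinner_perp_basis_x0[OF x0])
  qed
  then show "vinner d (chain_link d x0 l) (chain_point d x0 m s) = chain_rhs s l" if "l < m" for l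
    using that by (simp add: vinner_chain_link chain_rhs_def)
  have "vsub x0 (chain_point d x0 m s) = (\<lambda>k. (- s) * ?y k)" by (auto simp: vsub_def chain_point_def)
  then have "(vnorm d (vsub x0 (chain_point d x0 m s)))^2 = (- s) * ((- s) * vinner d ?y ?y)"
    unfolding vnorm_power2 by (simp only: vinner_scale_left vinner_scale_right)
  also have "\<dots> = s^2 * vinner d ?y ?y" by (simp add: power2_eq_square)
  also have "vinner d ?y ?y = real m"
    unfolding vinner_lin_comb_lin_comb_orthogonal[OF o finite_atLeastAtMost]
    using x0 md by (simp add: perp_basis_orthonormal)
  finally show "(vnorm d (vsub x0 (chain_point d x0 m s)))^2 = s^2 * real m" .
qed

lemma sum_chain_link_power2_le:
  assumes x0: "x0 \<in> Rd d" and d: "d = Suc m"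
  shows "(\<Sum>l<m. (vinner d (chain_link d x0 l) z)^2) \<le> 4 * vinner d z z"
proof -
  define f where "f j = (vinner d (perp_basis d x0 j) z)^2" for j
  have "(\<Sum>l<m. f (Suc l)) = (\<Sum>j\<in>{1..m}. f j)"
    by (rule sum.reindex_bij_witness[of _ "\<lambda>j. j - 1" Suc]) auto
  also have "\<dots> \<le> vinner d z z"
    unfolding f_def using d by (intro perp_basis_Bessel[OF x0]) auto
  finally have shifted: "(\<Sum>l<m. f (Suc l)) \<le> vinner d z z" .
  have "(\<Sum>l<m. f l) \<le> (\<Sum>l<Suc m. f l)" by (intro sum_mono2) (auto simp: f_def)
  also have "\<dots> = (\<Sum>l<m. f (Suc l))" by (subst sum.lessThan_Suc_shift) (simp add: f_def)
  finally have unshifted: "(\<Sum>l<m. f l) \<le> vinner d z z" using shifted by linarith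
  have "(\<Sum>l<m. (vinner d (chain_link d x0 l) z)^2) \<le> (\<Sum>l<m. 2 * f (Suc l) + 2 * f l)"
  proof (intro sum_mono)
    fix l
    have "(vinner d (chain_link d x0 l) z)^2
        = 2 * f (Suc l) + 2 * f l - (vinner d (perp_basis d x0 (Suc l)) z + vinner d (perp_basis d x0 l) z)^2"
      by (simp add: f_def vinner_chain_link power2_eq_square algebra_simps)
    then show "(vinner d (chain_link d x0 l) z)^2 \<le> 2 * f (Suc l) + 2 * f l" by simp
  qed
  also have "\<dots> \<le> 4 * vinner d z z"
    using shifted unshifted by (simp add: sum.distrib flip: sum_distrib_left)
  finally show ?thesis .
qed

lemma avg_smooth_chain:
  fixes n :: nat
  assumes x0: "x0 \<in> Rd d" and d: "d = Suc m" and i: "iA \<noteq> iB" "iA < n" "iB < n"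
    and \<mu>: "\<mu> \<ge> 0" and L: "8 * real n * \<mu>^2 \<le> L^2"
  shows "avg_smooth d n L (\<lambda>i. lsq d (real n * \<mu>) (chain_split m iA iB i) (chain_link d x0) (chain_rhs s))"
  unfolding avg_smooth_def
proof (intro ballI)
  fix x y
  define c where "c = real n * \<mu>"
  define z where "z = vsub x y"
  define D where "D i = (vnorm d (vsub (grad d (lsq d c (chain_split m iA iB i) (chain_link d x0) (chain_rhs s)) x)
    (grad d (lsq d c (chain_split m iA iB i) (chain_link d x0) (chain_rhs s)) y)))^2" for i
  have c: "c \<ge> 0" using \<mu> by (simp add: c_def)
  have D: "D i = (\<Sum>l\<in>chain_split m iA iB i. c^2 * (vinner d (chain_link d x0 l) z)^2
      * vinner d (chain_link d x0 l) (chain_link d x0 l))" for i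
    unfolding D_def z_def
    by (rule grad_lsq_diff_power2[OF x0 finite_chain_split c chain_split_orthogonal[OF x0]])
  have D_le: "D i \<le> (\<Sum>l\<in>chain_split m iA iB i. 2 * c^2 * (vinner d (chain_link d x0 l) z)^2)" for i
    unfolding D
  proof (intro sum_mono)
    fix l
    show "c^2 * (vinner d (chain_link d x0 l) z)^2 * vinner d (chain_link d x0 l) (chain_link d x0 l)
        \<le> 2 * c^2 * (vinner d (chain_link d x0 l) z)^2"
      using mult_left_mono[OF vinner_chain_link_self[OF x0, of l], of "c^2 * (vinner d (chain_link d x0 l) z)^2"]
      by (simp add: mult_ac)
  qed
  have "(\<Sum>i<n. D i) = D iA + D iB"
    using i by (intro sum_two_nonzero) (auto simp: D chain_split_def)
  also have "\<dots> \<le> 2 * c^2 * (\<Sum>l<m. (vinner d (chain_link d x0 l) z)^2)"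
    using D_le[of iA] D_le[of iB] i(1)
    by (simp add: chain_split_def sum_even_odd[of _ m, symmetric] sum_distrib_left distrib_left add_mono)
  also have "\<dots> \<le> 2 * c^2 * (4 * vinner d z z)"
    by (intro mult_left_mono sum_chain_link_power2_le[OF x0 d]) auto
  also have "\<dots> = real n * ((8 * real n * \<mu>^2) * vinner d z z)"
    by (simp add: c_def power2_eq_square)
  also have "\<dots> \<le> real n * (L^2 * vinner d z z)"
    using L vinner_self_nonneg by (intro mult_left_mono mult_right_mono) auto
  finally show "(\<Sum>i<n. (vnorm d (vsub (grad d (lsq d (real n * \<mu>) (chain_split m iA iB i) (chain_link d x0) (chain_rhs s)) x)
      (grad d (lsq d (real n * \<mu>) (chain_split m iA iB i) (chain_link d x0) (chain_rhs s)) y)))^2) / real n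
      \<le> L^2 * (vnorm d (vsub x y))^2"
    using i unfolding D_def c_def z_def vnorm_power2 by (simp add: field_simps)
qed

lemma exists_le_average:
  fixes p :: "nat \<Rightarrow> real"
  assumes "finite S" "S \<noteq> {}" "sum p S \<le> 1"
  shows "\<exists>i\<in>S. p i \<le> 1 / real (card S)"
proof (rule ccontr)
  assume "\<not> ?thesis"
  then have "(\<Sum>i\<in>S. 1 / real (card S)) < sum p S" using assms by (intro sum_strict_mono) auto
  with assms show False by simp
qed

lemma two_indices_small_mass:
  fixes p :: "nat \<Rightarrow> real"
  assumes n: "n \<ge> 2" and p0: "\<And>j. p j \<ge> 0" and p: "(\<Sum>j<n. p j) = 1"
  obtains iA iB where "iA \<noteq> iB" "iA < n" "iB < n" "p iA + p iB \<le> 3 / real n"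
proof -
  have "0 \<in> {..<n}" using n by simp
  then have "{..<n} \<noteq> {}" by blast
  then obtain iA where A: "iA < n" "p iA \<le> 1 / real n"
    using exists_le_average[of "{..<n}" p] p by auto
  have "sum p ({..<n} - {iA}) \<le> 1" using A p p0[of iA] by (simp add: sum_diff1)
  moreover have "card ({..<n} - {iA}) = n - 1" using A by simp
  ultimately obtain iB where B: "iB < n" "iB \<noteq> iA" "p iB \<le> 1 / real (n - 1)"
    using exists_le_average[of "{..<n} - {iA}" p] n by fastforce
  have "1 / real (n - 1) \<le> 2 / real n" using n by (simp add: field_simps of_nat_diff)
  then show thesis using that[of iA iB] A B by simp
qed

lemma mult_le_by_factor_bound:
  fixes T q a c :: real
  assumes "0 \<le> q" "q \<le> a" "T * a \<le> c" "0 \<le> c"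
  shows "T * q \<le> c"
proof (cases "T \<ge> 0")
  case True
  then have "T * q \<le> T * a" using assms(2) by (simp add: mult_left_mono)
  then show ?thesis using assms(3) by linarith
next
  case False
  then have "T * q \<le> 0" using assms(1) by (simp add: mult_nonpos_nonneg)
  then show ?thesis using assms(4) by linarith
qed

lemma chain_hard_instance:
  fixes n m :: nat
  assumes alg: "pifo_algorithm n p \<gamma> x0 R" and n: "2 \<le> n" and L: "0 < L" and B: "0 < B"
    and \<epsilon>: "0 \<le> \<epsilon>" and m: "1 \<le> m"
    and gap: "12 * \<epsilon> * sqrt (real n) * (real m)^2 \<le> L * B^2"
    and T: "6 * T \<le> real n * real m"
  shows "hard_instance n L B \<epsilon> p \<gamma> x0 R (Suc m) T"
proof -
  define d where "d = Suc m"
  have x0: "x0 d \<in> Rd d" and p0: "\<And>j. 0 \<le> p j" and p: "(\<Sum>j<n. p j) = 1"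
    using alg by (auto simp: pifo_algorithm_def)
  obtain iA iB where i: "iA \<noteq> iB" "iA < n" "iB < n" and q: "p iA + p iB \<le> 3 / real n"
    using two_indices_small_mass[OF n p0 p] .
  define \<mu> where "\<mu> = L / (3 * sqrt (real n))"
  define s where "s = B / sqrt (real m)"
  define fs where "fs i = lsq d (real n * \<mu>) (chain_split m iA iB i) (chain_link d (x0 d)) (chain_rhs s)" for i
  have \<mu>: "\<mu> \<ge> 0" using L by (simp add: \<mu>_def)
  have n0: "real n > 0" and m0: "real m > 0" using n m by auto
  have favg: "favg n fs x = \<mu> / 2 * (\<Sum>l<m. (vinner d (chain_link d (x0 d) l) x - chain_rhs s l)^2)" for x
    unfolding fs_def[abs_def] using i by (rule favg_chain)
  have favg_xstar: "favg n fs (chain_point d (x0 d) m s) = 0"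
    unfolding favg using chain_point_residual[OF x0, of m] by (simp add: d_def)
  have G: "\<mu> * s^2 / (2 * m) = L * B^2 / (6 * sqrt (real n) * (real m)^2)"
    using m0 by (simp add: \<mu>_def s_def power_divide power2_eq_square)
  show ?thesis
    unfolding d_def[symmetric]
  proof (rule hard_instanceI[where M = m and G = "\<mu> * s^2 / (2 * m)" and H = "{iA, iB}"
        and c = "\<lambda>_. real n * \<mu>" and J = "chain_split m iA iB" and b = "\<lambda>_. chain_rhs s"])
    show "pifo_algorithm n p \<gamma> x0 R" by (rule alg)
    show "fs i = lsq d (real n * \<mu>) (chain_split m iA iB i) (chain_link d (x0 d)) (chain_rhs s)" for i
      by (simp add: fs_def)
    show "progress_component d (x0 d) (real n * \<mu>) (chain_split m iA iB i) (chain_rhs s) (i \<in> {iA, iB})" for i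
      using chain_split_orthogonal[OF x0] \<mu>
      by (auto simp: progress_component_def finite_chain_split chain_rhs_def chain_split_def)
    show "avg_smooth d n L fs"
      unfolding fs_def[abs_def] using x0 i \<mu> L n0
      by (intro avg_smooth_chain) (auto simp: d_def \<mu>_def power_divide power_mult_distrib)
    show "chain_point d (x0 d) m s \<in> Rd d" using x0 by (rule chain_point_Rd) (simp add: d_def)
    show "favg n fs (chain_point d (x0 d) m s) \<le> favg n fs y" for y
      unfolding favg_xstar unfolding favg using \<mu> by (simp add: sum_nonneg)
    have "(vnorm d (vsub (x0 d) (chain_point d (x0 d) m s)))^2 = B^2"
      using chain_point_dist[OF x0, of m s] m0 B by (simp add: d_def s_def power_divide)
    then show "vnorm d (vsub (x0 d) (chain_point d (x0 d) m s)) \<le> B"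
      using B vnorm_nonneg by (metis order_refl power2_eq_iff_nonneg less_imp_le)
    show "\<mu> * s^2 / (2 * m) \<le> favg n fs x - favg n fs (chain_point d (x0 d) m s)"
      if "vanishes_beyond d (x0 d) k x" "k < m" for k x
      unfolding favg_xstar unfolding favg using chain_gap[OF that \<mu>, of s] by simp
    show "0 \<le> \<epsilon>" by (rule \<epsilon>)
    show "2 * \<epsilon> \<le> \<mu> * s^2 / (2 * m)"
      unfolding G using gap n0 m0 by (simp add: field_simps)
    show "0 < m" using m by simp
    have "T * (p iA + p iB) \<le> real m / 2"
    proof (rule mult_le_by_factor_bound)
      show "0 \<le> p iA + p iB" using p0[of iA] p0[of iB] by simp
      show "T * (3 / real n) \<le> real m / 2" using T n0 by (simp add: field_simps)
    qed (use q m0 in auto)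
    then show "T * (\<Sum>j<n. if j \<in> {iA, iB} then p j else 0) \<le> real m / 2"
      using i by (subst sum_two_nonzero[OF i]) auto
  qed
qed

lemma vnorm_translate_unit:
  assumes "vinner d w w = 1" "0 \<le> B"
  shows "vnorm d (vsub x (\<lambda>k. x k + B * w k)) = B"
proof -
  have "vsub x (\<lambda>k. x k + B * w k) = (\<lambda>k. (- B) * w k)" by (auto simp: vsub_def)
  then have "(vnorm d (vsub x (\<lambda>k. x k + B * w k)))^2 = (- B) * ((- B) * vinner d w w)"
    unfolding vnorm_power2 by (simp only: vinner_scale_left vinner_scale_right)
  then have "(vnorm d (vsub x (\<lambda>k. x k + B * w k)))^2 = B^2" using assms by (simp add: power2_eq_square)
  then show ?thesis using assms(2) vnorm_nonneg by (metis power2_eq_iff_nonneg)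
qed

lemma avg_smooth_first_link:
  fixes n :: nat
  assumes x0: "x0 \<in> Rd d" and L: "0 \<le> L" and n: "0 < n"
  shows "avg_smooth d n L (\<lambda>i. lsq d L {0} (chain_link d x0) (b i))"
  unfolding avg_smooth_def
proof (intro ballI)
  fix x y
  define w where "w = chain_link d x0 0"
  have w: "0 \<le> vinner d w w" "vinner d w w \<le> 1"
    using x0 by (simp_all add: w_def chain_link_def perp_basis_orthonormal vinner_self_nonneg)
  have "(vnorm d (vsub (grad d (lsq d L {0} (chain_link d x0) (b i)) x)
      (grad d (lsq d L {0} (chain_link d x0) (b i)) y)))^2 = L^2 * (vinner d w (vsub x y))^2 * vinner d w w" for i
    using grad_lsq_diff_power2[OF x0 _ L, of "{0}" "b i" x y] by (simp add: orthogonal_family_def w_def)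
  moreover have "L^2 * (vinner d w (vsub x y))^2 * vinner d w w \<le> L^2 * (vnorm d (vsub x y))^2"
  proof -
    have "(vinner d w (vsub x y))^2 * vinner d w w \<le> (vinner d w w * vinner d (vsub x y) (vsub x y)) * 1"
      using w vinner_Cauchy_Schwarz[of d w "vsub x y"] by (intro mult_mono) (auto simp: vinner_self_nonneg)
    also have "\<dots> \<le> vinner d (vsub x y) (vsub x y)"
      using w vinner_self_nonneg[of d "vsub x y"] by (simp add: mult_left_le_one_le)
    finally show ?thesis by (simp add: vnorm_power2 mult.assoc mult_left_mono)
  qed
  ultimately show "(\<Sum>i<n. (vnorm d (vsub (grad d (lsq d L {0} (chain_link d x0) (b i)) x)
      (grad d (lsq d L {0} (chain_link d x0) (b i)) y)))^2) / real n \<le> L^2 * (vnorm d (vsub x y))^2"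
    using n by simp
qed

text \<open>Dimension 2 and a single component carrying the target n B: the iterates stay orthogonal
  to w 1 until that component is drawn for the first time.\<close>
lemma single_hard_instance:
  fixes n :: nat
  assumes alg: "pifo_algorithm n p \<gamma> x0 R" and n: "1 \<le> n" and L: "0 \<le> L" and B: "0 \<le> B"
    and \<epsilon>: "0 \<le> \<epsilon>" "\<epsilon> \<le> L * B^2 / 4" and T: "2 * T \<le> real n"
  shows "hard_instance n L B \<epsilon> p \<gamma> x0 R 2 T"
proof -
  define d :: nat where "d = 2"
  have x0: "x0 d \<in> Rd d" and p0: "\<And>j. 0 \<le> p j" and p: "(\<Sum>j<n. p j) = 1"
    using alg by (auto simp: pifo_algorithm_def)
  obtain i\<^sub>0 where i\<^sub>0: "i\<^sub>0 < n" "p i\<^sub>0 \<le> 1 / real n"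
    using exists_le_average[of "{..<n}" p] n p by fastforce
  define w where "w = chain_link d (x0 d) 0"
  define b where "b i = (\<lambda>l::nat. if i = i\<^sub>0 then real n * B else 0)" for i
  define fs where "fs i = lsq d L {0} (chain_link d (x0 d)) (b i)" for i
  define xstar where "xstar = (\<lambda>k. x0 d k + B * w k)"
  have "w = perp_basis d (x0 d) 1" by (simp add: w_def chain_link_def)
  then have w: "vinner d w w = 1" "vinner d w (x0 d) = 0" "w \<in> Rd d"
    using x0 by (simp_all add: perp_basis_orthonormal vinner_perp_basis_x0 perp_basis_Rd d_def)
  have n0: "real n > 0" using n by simp
  have favg: "favg n fs x = L / 2 * (vinner d w x - B)^2 + L / 2 * (real n - 1) * B^2" for x
  proof -
    have "(\<Sum>i<n. fs i x) = fs i\<^sub>0 x + (\<Sum>i\<in>{..<n}-{i\<^sub>0}. L / 2 * (vinner d w x)^2)"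
      using i\<^sub>0 by (simp add: sum.remove fs_def lsq_def b_def w_def)
    also have "\<dots> = real n * (L / 2 * (vinner d w x - B)^2 + L / 2 * (real n - 1) * B^2)"
      using i\<^sub>0 n by (simp add: fs_def lsq_def b_def w_def of_nat_diff power2_eq_square field_simps)
    finally show ?thesis unfolding favg_def using n0 by simp
  qed
  have wxstar: "vinner d w xstar = B"
    unfolding xstar_def using vinner_add_right[of d w "x0 d" "\<lambda>k. B * w k"] w
    by (simp add: vinner_scale_right)
  show ?thesis
    unfolding d_def[symmetric]
  proof (rule hard_instanceI[where M = 1 and G = "L * B^2 / 2" and H = "{i\<^sub>0}"
        and c = "\<lambda>_. L" and J = "\<lambda>_. {0}" and b = b])
    show "pifo_algorithm n p \<gamma> x0 R" by (rule alg)
    show "fs i = lsq d L {0} (chain_link d (x0 d)) (b i)" for i by (simp add: fs_def)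
    show "progress_component d (x0 d) L {0} (b i) (i \<in> {i\<^sub>0})" for i
      using L by (auto simp: progress_component_def orthogonal_family_def b_def)
    show "avg_smooth d n L fs"
      unfolding fs_def[abs_def] using n by (intro avg_smooth_first_link[OF x0 L]) simp
    show "xstar \<in> Rd d" using x0 w by (auto simp: Rd_def xstar_def)
    show "favg n fs xstar \<le> favg n fs y" for y
      using L unfolding favg wxstar by simp
    show "vnorm d (vsub (x0 d) xstar) \<le> B"
      unfolding xstar_def using vnorm_translate_unit[OF w(1) B] by simp
    show "L * B^2 / 2 \<le> favg n fs x - favg n fs xstar"
      if "vanishes_beyond d (x0 d) k x" "k < 1" for k x
    proof -
      have "vinner d w x = 0"
        using that by (simp add: w_def vinner_chain_link vanishes_beyond_def)
      then show ?thesis unfolding favg wxstar by (simp add: power2_eq_square)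
    qed
    show "0 \<le> \<epsilon>" "2 * \<epsilon> \<le> L * B^2 / 2" "0 < (1::nat)" using \<epsilon> by simp_all
    have "T * p i\<^sub>0 \<le> 1 / 2"
    proof (rule mult_le_by_factor_bound)
      show "T * (1 / real n) \<le> 1 / 2" using T n0 by (simp add: field_simps)
    qed (use p0 i\<^sub>0 in auto)
    then show "T * (\<Sum>j<n. if j \<in> {i\<^sub>0} then p j else 0) \<le> real (1::nat) / 2"
      using i\<^sub>0 by (simp add: sum.delta)
  qed
qed

lemma powr_lower_bound_scale:
  fixes n :: nat and B L \<epsilon> :: real
  assumes n: "0 < n" and L: "0 < L" and \<epsilon>: "0 < \<epsilon>"
  defines "K \<equiv> B * real n powr (-1/4) * sqrt (L / \<epsilon>)"
  shows "B * real n powr (3/4) * sqrt (L / \<epsilon>) = real n * K"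
    and "K^2 * sqrt (real n) * \<epsilon> = L * B^2"
proof -
  have "real n powr (3/4) = real n powr (1 + (-1/4))" by simp
  also have "\<dots> = real n powr 1 * real n powr (-1/4)" by (rule powr_add)
  also have "\<dots> = real n * real n powr (-1/4)" using n by simp
  finally show "B * real n powr (3/4) * sqrt (L / \<epsilon>) = real n * K" by (simp add: K_def)
  have "(real n powr (-1/4))^2 = real n powr (-1/2)"
    using n by (simp add: power2_eq_square powr_add[symmetric])
  moreover have "sqrt (real n) = real n powr (1/2)" using n by (simp add: powr_half_sqrt)
  ultimately have "(real n powr (-1/4))^2 * sqrt (real n) = 1" using n by (simp add: powr_add[symmetric])
  then show "K^2 * sqrt (real n) * \<epsilon> = L * B^2"
    using L \<epsilon> by (simp add: K_def power_mult_distrib)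
qed

lemma pifo_lower_bound:
  fixes n :: nat and L B \<epsilon> :: real
  assumes n: "2 \<le> n" and L: "0 < L" and B: "0 < B" and \<epsilon>: "0 < \<epsilon>" "\<epsilon> \<le> L * B^2 / 4"
    and alg: "pifo_algorithm n p \<gamma> x0 R"
  shows "\<exists>d. real d \<le> 2 * (1 + B * real n powr (-1/4) * sqrt (L / \<epsilon>)) \<and>
    hard_instance n L B \<epsilon> p \<gamma> x0 R d (1/64 * (real n + B * real n powr (3/4) * sqrt (L / \<epsilon>)))"
proof -
  define K where "K = B * real n powr (-1/4) * sqrt (L / \<epsilon>)"
  have n0: "0 < real n" using n by simp
  have K0: "0 < K" using B L \<epsilon> n0 by (simp add: K_def)
  have scale: "B * real n powr (3/4) * sqrt (L / \<epsilon>) = real n * K"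
    "K^2 * sqrt (real n) * \<epsilon> = L * B^2"
    using powr_lower_bound_scale[of n L \<epsilon> B] n0 L \<epsilon> unfolding K_def by simp_all
  have T: "1/64 * (real n + B * real n powr (3/4) * sqrt (L / \<epsilon>)) = real n * (1 + K) / 64"
    unfolding scale(1) by (simp add: algebra_simps)
  have "\<exists>d. real d \<le> 2 * (1 + K) \<and> hard_instance n L B \<epsilon> p \<gamma> x0 R d (real n * (1 + K) / 64)"
  proof (cases "8 \<le> K")
    case True
    define m where "m = nat \<lfloor>K / 4\<rfloor>"
    have m: "real m \<le> K / 4" "K / 4 - 1 < real m" using K0 by (simp_all add: m_def) linarith+
    then have m1: "1 \<le> m" using True by simp
    have "hard_instance n L B \<epsilon> p \<gamma> x0 R (Suc m) (real n * (1 + K) / 64)"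
    proof (rule chain_hard_instance[OF alg n L B _ m1])
      have "(real m)^2 \<le> (K / 4)^2" using m by (intro power_mono) auto
      then have "12 * \<epsilon> * sqrt (real n) * (real m)^2 \<le> 12 * \<epsilon> * sqrt (real n) * (K / 4)^2"
        using \<epsilon> by (intro mult_left_mono) auto
      also have "\<dots> = 3/4 * (K^2 * sqrt (real n) * \<epsilon>)" by (simp add: power_divide)
      also have "\<dots> \<le> L * B^2" using scale(2) L B by simp
      finally show "12 * \<epsilon> * sqrt (real n) * (real m)^2 \<le> L * B^2" .
      have "6 * (1 + K) \<le> 64 * real m" using m True by (simp add: field_simps)
      then show "6 * (real n * (1 + K) / 64) \<le> real n * real m"
        using n0 mult_left_mono[of "6 * (1 + K)" "64 * real m" "real n"] by simp
    qed (use \<epsilon> in simp)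
    moreover have "real (Suc m) \<le> 2 * (1 + K)" using m K0 by simp
    ultimately show ?thesis by blast
  next
    case False
    have "hard_instance n L B \<epsilon> p \<gamma> x0 R 2 (real n * (1 + K) / 64)"
      using False n0 L B \<epsilon> by (intro single_hard_instance[OF alg]) (simp_all add: field_simps)
    moreover have "real (2::nat) \<le> 2 * (1 + K)" using K0 by simp
    ultimately show ?thesis by blast
  qed
  then show ?thesis by (simp only: T K_def)
qed

theorem theorem3p4:
  shows "\<exists>c>0. \<exists>C>0. \<forall>(n::nat) (L::real) (B::real) (\<epsilon>::real).
    n \<ge> 2 \<and> L > 0 \<and> B > 0 \<and> \<epsilon> > 0 \<and> \<epsilon> \<le> L * B^2 / 4 \<longrightarrow>
    (\<forall>p \<gamma> x0 R. pifo_algorithm n p \<gamma> x0 R \<longrightarrow>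
      (\<exists>(d::nat) (fs::nat \<Rightarrow> vec \<Rightarrow> real) xstar.
         real d \<le> C * (1 + B * real n powr (-1/4) * sqrt (L / \<epsilon>)) \<and>
         (\<forall>i<n. \<forall>x\<in>Rd d. \<exists>g. has_grad d (fs i) x g) \<and>
         (\<forall>i<n. \<forall>t\<ge>1. \<forall>x\<in>Rd d. \<exists>!u. is_prox d (\<gamma> t) (fs i) x u) \<and>
         avg_smooth d n L fs \<and>
         convex_Rd d (favg n fs) \<and>
         xstar \<in> Rd d \<and> (\<forall>y\<in>Rd d. favg n fs xstar \<le> favg n fs y) \<and>
         vnorm d (vsub (x0 d) xstar) \<le> B \<and>
         (\<forall>t::nat. real t \<le> c * (real n + B * real n powr (3/4) * sqrt (L / \<epsilon>)) \<longrightarrow>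
            pifo_expect n p \<gamma> x0 R d fs (favg n fs) t - favg n fs xstar \<ge> \<epsilon>)))"
proof (rule exI[of _ "1/64::real"], intro conjI exI[of _ "2::real"] allI impI, goal_cases)
  case (3 n L B \<epsilon> p \<gamma> x0 R)
  then show ?case using pifo_lower_bound[of n L B \<epsilon> p \<gamma> x0 R] unfolding hard_instance_def by blast
qed simp_all

end
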